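(* Let $0<\sigma<1$ and let $\mathcal T_\bullet$ be a mesh of $\Gamma$ satisfying (M4). Then there is $C>0$, depending only on $d$, $\sigma$, $\Gamma$ and $C_{\rm cent}$, such that for all $v\in H^\sigma(\Gamma)^D$ $$\|v\|_{H^\sigma(\Gamma)}^2\le\sum_{T\in\mathcal T_\bullet}\sum_{T'\in\Pi_\bullet(T)}|v|_{H^\sigma(T\cup T')}^2+C\sum_{T\in\mathcal T_\bullet}{\rm diam}(T)^{-2\sigma}\|v\|_{L^2(T)}^2.$$
   Context: $d\ge2$, $\Omega\subset\mathbb R^d$ bounded Lipschitz, $\Gamma=\partial\Omega$, $D\ge1$. For measurable $\omega\subseteq\Gamma$: $|v|_{H^\sigma(\omega)}^2=\sum_j\int_\omega\int_\omega\frac{|v_j(x)-v_j(y)|^2}{|x-y|^{d-1+2\sigma}}dxdy$ and $\|v\|_{H^\sigma(\omega)}^2=\|v\|^2_{L^2(\omega)}+|v|^2_{H^\sigma(\omega)}$. A mesh $\mathcal T_\bullet$ is a finite set of compact sets $T=\gamma_T(\widehat T)\subseteq\Gamma$ ($\widehat T$ a compact Lipschitz domain in $\mathbb R^{d-1}$, $\gamma_T$ bi-Lipschitz) covering $\Gamma$ with pairwise intersections of measure zero. $\pi_\bullet(T)=\bigcup\{T'\in\mathcal T_\bullet:T'\cap T\ne\emptyset\}$, $\Pi_\bullet(T)=\{T'\in\mathcal T_\bullet:T'\cap T\ne\emptyset\}$. (M4): ${\rm diam}(T)\le C_{\rm cent}{\rm dist}(T,\Gamma\setminus\pi_\bullet(T))$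 for all $T\in\mathcal T_\bullet$ (with ${\rm dist}(T,\emptyset)={\rm diam}(\Gamma)$). *)

theory Defs
  imports "HOL-Analysis.Analysis"
begin

text \<open>A bounded open set whose boundary is locally the graph of a Lipschitz function:
  near every boundary point x there is a unit direction e, a radius r and a Lipschitz
  function g (only its values on the hyperplane orthogonal to e matter) such that,
  inside the ball, the set is the strict subgraph of g in direction e.\<close>

definition lipschitz_boundary :: "'a::euclidean_space set \<Rightarrow> bool" where
  "lipschitz_boundary \<Omega> \<longleftrightarrow>
     (\<forall>x\<in>frontier \<Omega>. \<exists>e r L g. norm e = 1 \<and> r > 0 \<and> L-lipschitz_on UNIV g \<and>
        \<Omega> \<inter> ball x r = {y \<in> ball x r. y \<bullet> e < g (y - (y \<bullet> e) *\<^sub>R e)})"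

definition bounded_lipschitz_domain :: "'a::euclidean_space set \<Rightarrow> bool" where
  "bounded_lipschitz_domain \<Omega> \<longleftrightarrow> open \<Omega> \<and> bounded \<Omega> \<and> \<Omega> \<noteq> {} \<and> lipschitz_boundary \<Omega>"

definition compact_lipschitz_domain :: "'a::euclidean_space set \<Rightarrow> bool" where
  "compact_lipschitz_domain K \<longleftrightarrow> (\<exists>U. bounded_lipschitz_domain U \<and> K = closure U)"

definition bi_lipschitz_on :: "'a::metric_space set \<Rightarrow> ('a \<Rightarrow> 'b::metric_space) \<Rightarrow> bool" where
  "bi_lipschitz_on X f \<longleftrightarrow> (\<exists>L>0. \<forall>x\<in>X. \<forall>y\<in>X.
      dist x y \<le> L * dist (f x) (f y) \<and> dist (f x) (f y) \<le> L * dist x y)"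

definition hausdorff_normalization :: "real \<Rightarrow> real" where
  "hausdorff_normalization s = pi powr (s / 2) / (Gamma (s / 2 + 1) * 2 powr s)"

definition hausdorff_premeasure :: "real \<Rightarrow> real \<Rightarrow> 'a::metric_space set \<Rightarrow> ennreal" where
  "hausdorff_premeasure s \<delta> A =
     (INF C \<in> {C :: nat \<Rightarrow> 'a set. A \<subseteq> (\<Union>i. C i) \<and> (\<forall>i. diameter (C i) \<le> \<delta>)}.
        (\<Sum>i. ennreal (hausdorff_normalization s * diameter (C i) powr s)))"

definition hausdorff_measure :: "real \<Rightarrow> 'a::metric_space set \<Rightarrow> ennreal" where
  "hausdorff_measure s A = (SUP \<delta> \<in> {0<..}. hausdorff_premeasure s \<delta> A)"

definition surface_measure :: "'a::euclidean_space set \<Rightarrow> 'a measure" where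
  "surface_measure \<Gamma> = measure_of \<Gamma> {A. A \<subseteq> \<Gamma> \<and> A \<in> sets borel}
      (hausdorff_measure (real DIM('a) - 1))"

definition L2_sq :: "'a::euclidean_space set \<Rightarrow> nat \<Rightarrow> ('a \<Rightarrow> nat \<Rightarrow> real) \<Rightarrow> 'a set \<Rightarrow> ennreal" where
  "L2_sq \<Gamma> D v \<omega> = (\<Sum>j<D. \<integral>\<^sup>+ x. indicator \<omega> x * ennreal ((v x j)\<^sup>2) \<partial>surface_measure \<Gamma>)"

definition Hs_semi_sq :: "'a::euclidean_space set \<Rightarrow> real \<Rightarrow> nat \<Rightarrow> ('a \<Rightarrow> nat \<Rightarrow> real) \<Rightarrow> 'a set \<Rightarrow> ennreal" where
  "Hs_semi_sq \<Gamma> \<sigma> D v \<omega> = (\<Sum>j<D. \<integral>\<^sup>+ p. indicator (\<omega> \<times> \<omega>) p *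
       ennreal ((v (fst p) j - v (snd p) j)\<^sup>2 /
                dist (fst p) (snd p) powr (real DIM('a) - 1 + 2 * \<sigma>))
     \<partial>(surface_measure \<Gamma> \<Otimes>\<^sub>M surface_measure \<Gamma>))"

definition Hs_norm_sq :: "'a::euclidean_space set \<Rightarrow> real \<Rightarrow> nat \<Rightarrow> ('a \<Rightarrow> nat \<Rightarrow> real) \<Rightarrow> 'a set \<Rightarrow> ennreal" where
  "Hs_norm_sq \<Gamma> \<sigma> D v \<omega> = L2_sq \<Gamma> D v \<omega> + Hs_semi_sq \<Gamma> \<sigma> D v \<omega>"

definition in_Hs :: "'a::euclidean_space set \<Rightarrow> real \<Rightarrow> nat \<Rightarrow> ('a \<Rightarrow> nat \<Rightarrow> real) \<Rightarrow> bool" where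
  "in_Hs \<Gamma> \<sigma> D v \<longleftrightarrow> (\<forall>j<D. (\<lambda>x. v x j) \<in> borel_measurable (surface_measure \<Gamma>)) \<and>
      Hs_norm_sq \<Gamma> \<sigma> D v \<Gamma> < \<infinity>"

definition is_mesh :: "'b::euclidean_space itself \<Rightarrow> 'a::euclidean_space set \<Rightarrow> 'a set set \<Rightarrow> bool" where
  "is_mesh _ \<Gamma> \<T> \<longleftrightarrow> finite \<T> \<and> \<Union>\<T> = \<Gamma> \<and>
     (\<forall>T\<in>\<T>. compact T \<and> T \<subseteq> \<Gamma> \<and>
        (\<exists>(That :: 'b set) \<gamma>. compact_lipschitz_domain That \<and> bi_lipschitz_on That \<gamma> \<and> T = \<gamma> ` That)) \<and>
     (\<forall>T\<in>\<T>. \<forall>T'\<in>\<T>. T \<noteq> T' \<longrightarrow> emeasure (surface_measure \<Gamma>) (T \<inter> T') = 0)"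

definition patch_elems :: "'a set set \<Rightarrow> 'a set \<Rightarrow> 'a set set" where
  "patch_elems \<T> T = {T' \<in> \<T>. T' \<inter> T \<noteq> {}}"

definition patch :: "'a set set \<Rightarrow> 'a set \<Rightarrow> 'a set" where
  "patch \<T> T = \<Union>(patch_elems \<T> T)"

definition dist_set :: "'a::euclidean_space set \<Rightarrow> 'a set \<Rightarrow> 'a set \<Rightarrow> real" where
  "dist_set \<Gamma> A B = (if B = {} then diameter \<Gamma> else setdist A B)"

definition M4 :: "'a::euclidean_space set \<Rightarrow> real \<Rightarrow> 'a set set \<Rightarrow> bool" where
  "M4 \<Gamma> Ccent \<T> \<longleftrightarrow> (\<forall>T\<in>\<T>. diameter T \<le> Ccent * dist_set \<Gamma> T (\<Gamma> - patch \<T> T))"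

end

theory Submission
  imports Defs
begin

text \<open>
  Pairs \<open>(x, y) \<in> \<Gamma> \<times> \<Gamma>\<close> lying in a common patch \<open>T \<union> T'\<close> with \<open>T' \<in> \<Pi>(T)\<close> make up the
  first sum. For any other pair, with \<open>x \<in> T\<close> and \<open>y \<in> T''\<close>, condition (M4) gives
  \<open>|x - y| \<ge> diam T / C_cent\<close> and \<open>|x - y| \<ge> diam T'' / C_cent\<close>, while
  \<open>(v x - v y)^2 \<le> 2 (v x)^2 + 2 (v y)^2\<close>. These pairs therefore contribute at most
  \<open>4 \<Sum>_T \<integral>_T (v x)^2 \<integral>_{|x - y| \<ge> diam T / C_cent} |x - y|^(-(d - 1 + 2\<sigma>)) dy dx\<close>.
  A Lipschitz boundary is locally the graph of a Lipschitz function over a hyperplane; covering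
  such a graph by grid cells shows that \<open>\<Gamma>\<close> is upper Ahlfors regular,
  \<open>|\<Gamma> \<inter> B(y, \<rho>)| \<le> A \<rho>^(d - 1)\<close>. Summing this over the dyadic shells
  \<open>2^k \<delta> \<le> |x - y| \<le> 2^(k+1) \<delta>\<close> bounds the inner integral by \<open>K \<delta>^(-2\<sigma>)\<close>.
  Finally, the \<open>L^2\<close> norm on \<open>\<Gamma>\<close> is at most \<open>\<Sum>_T (diam \<Gamma> / diam T)^(2\<sigma>)\<close> times the
  \<open>L^2\<close> norm on \<open>T\<close>.
\<close>

section \<open>Hausdorff measure bounds from fine covers\<close>

definition fine_cover_bound :: "real \<Rightarrow> 'a::metric_space set \<Rightarrow> real \<Rightarrow> bool" where
  "fine_cover_bound s A B \<longleftrightarrow> (\<forall>\<delta>>0. \<exists>F. finite F \<and> A \<subseteq> \<Union>F \<and> (\<forall>S\<in>F. diameter S \<le> \<delta>) \<and>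
     (\<Sum>S\<in>F. hausdorff_normalization s * diameter S powr s) \<le> B)"

lemma hausdorff_normalization_pos: "0 \<le> s \<Longrightarrow> 0 < hausdorff_normalization s"
  unfolding hausdorff_normalization_def
  by (intro divide_pos_pos mult_pos_pos) (auto intro!: Gamma_real_pos)

lemma hausdorff_premeasure_le_finite_cover:
  fixes A :: "'a::metric_space set"
  assumes fin: "finite F" and cover: "A \<subseteq> \<Union>F" and small: "\<forall>S\<in>F. diameter S \<le> \<delta>" and "0 \<le> \<delta>"
  shows "hausdorff_premeasure s \<delta> A \<le> (\<Sum>S\<in>F. ennreal (hausdorff_normalization s * diameter S powr s))"
proof -
  obtain h where h: "bij_betw h {0..<card F} F"
    using ex_bij_betw_nat_finite[OF fin] by blast
  then have h_onto: "h ` {0..<card F} = F"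
    by (simp add: bij_betw_imp_surj_on)
  define C where "C i = (if i < card F then h i else {})" for i
  have "A \<subseteq> (\<Union>i. C i)"
  proof
    fix x assume "x \<in> A"
    then have "x \<in> (\<Union>i\<in>{0..<card F}. h i)"
      using cover h_onto by blast
    then show "x \<in> (\<Union>i. C i)"
      by (auto simp: C_def)
  qed
  moreover have "diameter (C i) \<le> \<delta>" for i
    using small \<open>0 \<le> \<delta>\<close> h_onto by (cases "i < card F") (auto simp: C_def)
  ultimately have "hausdorff_premeasure s \<delta> A \<le> (\<Sum>i. ennreal (hausdorff_normalization s * diameter (C i) powr s))"
    unfolding hausdorff_premeasure_def by (intro INF_lower) simp
  also have "\<dots> = (\<Sum>i<card F. ennreal (hausdorff_normalization s * diameter (C i) powr s))"
    by (rule suminf_finite) (simp_all add: C_def)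
  also have "\<dots> = (\<Sum>i\<in>{0..<card F}. ennreal (hausdorff_normalization s * diameter (h i) powr s))"
    by (intro sum.cong) (auto simp: C_def)
  also have "\<dots> = (\<Sum>S\<in>F. ennreal (hausdorff_normalization s * diameter S powr s))"
    by (rule sum.reindex_bij_betw[OF h])
  finally show ?thesis .
qed

lemma hausdorff_measure_le_fine_cover_bound:
  assumes "0 \<le> s" and "fine_cover_bound s A B"
  shows "hausdorff_measure s A \<le> ennreal B"
  unfolding hausdorff_measure_def
proof (rule SUP_least)
  fix \<delta> :: real assume "\<delta> \<in> {0<..}"
  then obtain F where F: "finite F" "A \<subseteq> \<Union>F" "\<forall>S\<in>F. diameter S \<le> \<delta>"
    "(\<Sum>S\<in>F. hausdorff_normalization s * diameter S powr s) \<le> B"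
    using assms(2) by (auto simp: fine_cover_bound_def)
  have "hausdorff_premeasure s \<delta> A \<le> (\<Sum>S\<in>F. ennreal (hausdorff_normalization s * diameter S powr s))"
    using hausdorff_premeasure_le_finite_cover[OF F(1-3)] \<open>\<delta> \<in> {0<..}\<close> by simp
  also have "\<dots> = ennreal (\<Sum>S\<in>F. hausdorff_normalization s * diameter S powr s)"
    using hausdorff_normalization_pos[OF \<open>0 \<le> s\<close>] by (intro sum_ennreal) simp
  also have "\<dots> \<le> ennreal B"
    using F(4) by (rule ennreal_leI)
  finally show "hausdorff_premeasure s \<delta> A \<le> ennreal B" .
qed

lemma fine_cover_bound_mono:
  "fine_cover_bound s A B \<Longrightarrow> A' \<subseteq> A \<Longrightarrow> B \<le> B' \<Longrightarrow> fine_cover_bound s A' B'"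
  unfolding fine_cover_bound_def by (meson order_trans)

lemma sum_UN_le:
  fixes f :: "'b \<Rightarrow> 'c::ordered_comm_monoid_add"
  assumes "finite X" "\<And>x. x \<in> X \<Longrightarrow> finite (F x)" "\<And>S. 0 \<le> f S"
  shows "sum f (\<Union>x\<in>X. F x) \<le> (\<Sum>x\<in>X. sum f (F x))"
proof -
  have "(\<Union>x\<in>X. F x) = snd ` Sigma X F" by force
  moreover have "sum f (snd ` Sigma X F) \<le> sum (f \<circ> snd) (Sigma X F)"
    using assms by (intro sum_image_le) auto
  ultimately have "sum f (\<Union>x\<in>X. F x) \<le> sum (f \<circ> snd) (Sigma X F)"
    by simp
  also have "\<dots> = (\<Sum>x\<in>X. sum f (F x))"
    using sum.Sigma[OF assms(1), of F "\<lambda>x y. f y"] assms(2) by (simp add: o_def case_prod_unfold)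
  finally show ?thesis .
qed

lemma fine_cover_bound_UN:
  assumes "finite X" "0 \<le> s" and bound: "\<And>x. x \<in> X \<Longrightarrow> fine_cover_bound s (A x) (B x)"
  shows "fine_cover_bound s (\<Union>x\<in>X. A x) (\<Sum>x\<in>X. B x)"
  unfolding fine_cover_bound_def
proof (intro allI impI)
  fix \<delta> :: real assume "0 < \<delta>"
  then have "\<forall>x\<in>X. \<exists>F. finite F \<and> A x \<subseteq> \<Union>F \<and> (\<forall>S\<in>F. diameter S \<le> \<delta>) \<and>
      (\<Sum>S\<in>F. hausdorff_normalization s * diameter S powr s) \<le> B x"
    using bound by (auto simp: fine_cover_bound_def)
  from bchoice[OF this] obtain F where "\<forall>x\<in>X. finite (F x) \<and> A x \<subseteq> \<Union>(F x) \<and>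
      (\<forall>S\<in>F x. diameter S \<le> \<delta>) \<and> (\<Sum>S\<in>F x. hausdorff_normalization s * diameter S powr s) \<le> B x"
    by (rule exE)
  note F = this[rule_format]
  have "0 \<le> hausdorff_normalization s * diameter S powr s" for S
    using hausdorff_normalization_pos[OF \<open>0 \<le> s\<close>] by simp
  then have "(\<Sum>S\<in>(\<Union>x\<in>X. F x). hausdorff_normalization s * diameter S powr s)
      \<le> (\<Sum>x\<in>X. \<Sum>S\<in>F x. hausdorff_normalization s * diameter S powr s)"
    using F \<open>finite X\<close> by (intro sum_UN_le) simp_all
  also have "\<dots> \<le> (\<Sum>x\<in>X. B x)"
    using F by (intro sum_mono) simp
  finally have "(\<Sum>S\<in>(\<Union>x\<in>X. F x). hausdorff_normalization s * diameter S powr s) \<le> (\<Sum>x\<in>X. B x)" .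
  moreover have "finite (\<Union>x\<in>X. F x)" "\<forall>S\<in>(\<Union>x\<in>X. F x). diameter S \<le> \<delta>"
    using F \<open>finite X\<close> by auto
  moreover have "(\<Union>x\<in>X. A x) \<subseteq> \<Union>(\<Union>x\<in>X. F x)"
  proof -
    have "A x \<subseteq> \<Union>(\<Union>x\<in>X. F x)" if "x \<in> X" for x
      using F[OF that] that by blast
    then show ?thesis by blast
  qed
  ultimately show "\<exists>F. finite F \<and> (\<Union>x\<in>X. A x) \<subseteq> \<Union>F \<and> (\<forall>S\<in>F. diameter S \<le> \<delta>) \<and>
      (\<Sum>S\<in>F. hausdorff_normalization s * diameter S powr s) \<le> (\<Sum>x\<in>X. B x)"
    by blast
qed

section \<open>Upper Ahlfors regularity of Lipschitz boundaries\<close>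

definition graph_over :: "'a::real_inner \<Rightarrow> ('a \<Rightarrow> real) \<Rightarrow> 'a set" where
  "graph_over e g = {y. y \<bullet> e = g (y - (y \<bullet> e) *\<^sub>R e)}"

lemma unit_vector_orthonormal_complement:
  fixes e :: "'a::euclidean_space"
  assumes "norm e = 1"
  obtains B where "finite B" "card B = DIM('a) - 1"
    "\<And>w. w \<bullet> w = (w \<bullet> e)\<^sup>2 + (\<Sum>i\<in>B. (w \<bullet> i)\<^sup>2)" "\<And>i. i \<in> B \<Longrightarrow> norm i = 1"
proof -
  obtain S where S: "e \<in> S" "pairwise orthogonal S" "\<And>x. x \<in> S \<Longrightarrow> norm x = 1"
    "card S = DIM('a)" "span S = UNIV"
    using vector_in_orthonormal_basis[OF assms] by metis
  have "finite S"
    using S(4) DIM_positive card_gt_0_iff by metis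
  have Parseval: "w \<bullet> w = (\<Sum>i\<in>S. (w \<bullet> i)\<^sup>2)" for w :: 'a
  proof -
    have "w = (\<Sum>i\<in>S. (w \<bullet> i) *\<^sub>R i)"
      using orthonormal_basis_expand[OF S(2,3)] S(5) \<open>finite S\<close> by auto
    then have "w \<bullet> w = w \<bullet> (\<Sum>i\<in>S. (w \<bullet> i) *\<^sub>R i)" by simp
    then show ?thesis
      by (simp add: inner_sum_right power2_eq_square)
  qed
  show thesis
  proof (rule that[of "S - {e}"])
    show "finite (S - {e})" "card (S - {e}) = DIM('a) - 1"
      using \<open>finite S\<close> S(1,4) by simp_all
    show "w \<bullet> w = (w \<bullet> e)\<^sup>2 + (\<Sum>i\<in>S - {e}. (w \<bullet> i)\<^sup>2)" for w
      using Parseval[of w] sum.remove[OF \<open>finite S\<close> S(1)] by simp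
    show "norm i = 1" if "i \<in> S - {e}" for i
      using S(3) that by simp
  qed
qed

lemma graph_over_dist_le:
  fixes e y z :: "'a::real_inner"
  assumes "norm e = 1" and lip: "L-lipschitz_on UNIV g"
    and Parseval: "\<And>w. w \<bullet> w = (w \<bullet> e)\<^sup>2 + (\<Sum>i\<in>B. (w \<bullet> i)\<^sup>2)"
    and "y \<in> graph_over e g" "z \<in> graph_over e g" "0 \<le> \<epsilon>"
    and close: "\<And>i. i \<in> B \<Longrightarrow> \<bar>(y - z) \<bullet> i\<bar> \<le> \<epsilon>"
  shows "norm (y - z) \<le> (1 + L) * sqrt (card B) * \<epsilon>"
proof -
  define P where "P x = x - (x \<bullet> e) *\<^sub>R e" for x
  define w where "w = y - z"
  have "e \<bullet> e = 1"
    using \<open>norm e = 1\<close> by (simp add: norm_eq_1)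
  then have "P w \<bullet> P w = w \<bullet> w - (w \<bullet> e)\<^sup>2"
    by (simp add: P_def inner_diff_left inner_diff_right power2_eq_square inner_commute)
  then have "(norm (P w))\<^sup>2 = (\<Sum>i\<in>B. (w \<bullet> i)\<^sup>2)"
    using Parseval[of w] by (simp add: power2_norm_eq_inner)
  also have "\<dots> \<le> (sqrt (card B) * \<epsilon>)\<^sup>2"
  proof -
    have "(w \<bullet> i)\<^sup>2 \<le> \<epsilon>\<^sup>2" if "i \<in> B" for i
      using close[OF that] power_mono[of "\<bar>w \<bullet> i\<bar>" \<epsilon> 2] by (simp add: w_def)
    then show ?thesis
      using sum_bounded_above[of B "\<lambda>i. (w \<bullet> i)\<^sup>2" "\<epsilon>\<^sup>2"] by (simp add: power_mult_distrib)
  qed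
  finally have Pw: "norm (P w) \<le> sqrt (card B) * \<epsilon>"
    using \<open>0 \<le> \<epsilon>\<close> by (simp add: power2_le_iff_abs_le)
  have "\<bar>w \<bullet> e\<bar> = \<bar>g (P y) - g (P z)\<bar>"
    using assms(4,5) by (simp add: graph_over_def P_def w_def inner_diff_left)
  also have "\<dots> \<le> L * dist (P y) (P z)"
    using lip by (simp add: lipschitz_on_def dist_real_def)
  also have "dist (P y) (P z) = norm (P w)"
    by (simp add: dist_norm P_def w_def algebra_simps inner_diff_left)
  finally have "norm w \<le> (1 + L) * norm (P w)"
    using norm_triangle_ineq[of "P w" "(w \<bullet> e) *\<^sub>R e"] \<open>norm e = 1\<close> by (simp add: P_def algebra_simps)
  also have "\<dots> \<le> (1 + L) * (sqrt (card B) * \<epsilon>)"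
    using Pw lipschitz_on_nonneg[OF lip] by (intro mult_left_mono) auto
  finally show ?thesis
    by (simp add: w_def mult.assoc)
qed

lemma grid_cell_exists:
  fixes c y :: "'a::real_inner" and \<rho> \<epsilon> :: real
  assumes "dist c y \<le> \<rho>" "0 < \<epsilon>" "\<And>i. i \<in> B \<Longrightarrow> norm i = 1"
  defines "m \<equiv> \<lceil>\<rho> / \<epsilon>\<rceil> + 1"
  shows "\<exists>k\<in>PiE B (\<lambda>_. {-m..<m}). \<forall>i\<in>B. k i * \<epsilon> \<le> (y - c) \<bullet> i \<and> (y - c) \<bullet> i \<le> (k i + 1) * \<epsilon>"
proof -
  define k where "k = restrict (\<lambda>i. \<lfloor>((y - c) \<bullet> i) / \<epsilon>\<rfloor>) B"
  have "k i \<in> {-m..<m} \<and> k i * \<epsilon> \<le> (y - c) \<bullet> i \<and> (y - c) \<bullet> i \<le> (k i + 1) * \<epsilon>" if "i \<in> B" for i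
  proof -
    have "\<bar>(y - c) \<bullet> i\<bar> \<le> \<rho>"
      using Cauchy_Schwarz_ineq2[of "y - c" i] assms(1,3) that by (simp add: dist_norm norm_minus_commute)
    then have "-(\<rho> / \<epsilon>) \<le> ((y - c) \<bullet> i) / \<epsilon>" "((y - c) \<bullet> i) / \<epsilon> \<le> \<rho> / \<epsilon>"
      using \<open>0 < \<epsilon>\<close> by (auto simp: field_simps)
    moreover have ki: "k i = \<lfloor>((y - c) \<bullet> i) / \<epsilon>\<rfloor>"
      using that by (simp add: k_def)
    ultimately have "\<lfloor>-(\<rho> / \<epsilon>)\<rfloor> \<le> k i" "k i \<le> \<lfloor>\<rho> / \<epsilon>\<rfloor>"
      by (simp_all add: floor_mono)
    then have "-\<lceil>\<rho> / \<epsilon>\<rceil> \<le> k i" "k i \<le> \<lceil>\<rho> / \<epsilon>\<rceil>"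
      using floor_le_ceiling[of "\<rho> / \<epsilon>"] by (simp_all add: ceiling_def)
    moreover have "k i \<le> ((y - c) \<bullet> i) / \<epsilon>" "((y - c) \<bullet> i) / \<epsilon> \<le> k i + 1"
      using real_of_int_floor_add_one_gt[of "((y - c) \<bullet> i) / \<epsilon>"] by (simp_all add: ki)
    ultimately show ?thesis
      using \<open>0 < \<epsilon>\<close> by (simp add: m_def field_simps)
  qed
  then show ?thesis
    by (intro bexI[of _ k]) (auto simp: k_def)
qed

lemma ceiling_divide_plus_one_mult_le:
  fixes \<rho> \<epsilon> :: real
  assumes "0 < \<epsilon>" "\<epsilon> \<le> \<rho>"
  shows "(\<lceil>\<rho> / \<epsilon>\<rceil> + 1) * \<epsilon> \<le> 3 * \<rho>"
proof -
  have "\<lceil>\<rho> / \<epsilon>\<rceil> + 1 < \<rho> / \<epsilon> + 2"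
    using ceiling_correct[of "\<rho> / \<epsilon>"] by simp
  then have "(\<lceil>\<rho> / \<epsilon>\<rceil> + 1) * \<epsilon> < \<rho> + 2 * \<epsilon>"
    using \<open>0 < \<epsilon>\<close> by (simp add: field_simps)
  then show ?thesis
    using \<open>\<epsilon> \<le> \<rho>\<close> by simp
qed

text \<open>
  The cells live on a grid of mesh \<open>\<epsilon>\<close> in the \<open>d - 1\<close> coordinates of the hyperplane orthogonal
  to \<open>e\<close>. Over each cell the Lipschitz graph has diameter \<open>O(\<epsilon>)\<close>, so \<open>O((\<rho>/\<epsilon>)^(d - 1))\<close>
  cells suffice.
\<close>

lemma graph_over_cells:
  fixes e c :: "'a::euclidean_space" and \<rho> \<epsilon> :: real
  assumes "norm e = 1" and lip: "L-lipschitz_on UNIV g" and "0 < \<epsilon>"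
    and B: "finite B" "\<And>w. w \<bullet> w = (w \<bullet> e)\<^sup>2 + (\<Sum>i\<in>B. (w \<bullet> i)\<^sup>2)" "\<And>i. i \<in> B \<Longrightarrow> norm i = 1"
  defines "m \<equiv> \<lceil>\<rho> / \<epsilon>\<rceil> + 1"
  obtains F where "finite F" "card F \<le> nat (2 * m) ^ card B" "graph_over e g \<inter> cball c \<rho> \<subseteq> \<Union>F"
    "\<And>S. S \<in> F \<Longrightarrow> bounded S \<and> diameter S \<le> (1 + L) * sqrt (card B) * \<epsilon>"
proof -
  define K where "K = PiE B (\<lambda>_. {-m..<m})"
  define Q where "Q k = {y \<in> graph_over e g. \<forall>i\<in>B. k i * \<epsilon> \<le> (y - c) \<bullet> i \<and> (y - c) \<bullet> i \<le> (k i + 1) * \<epsilon>}"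
    for k :: "'a \<Rightarrow> int"
  have "finite K" "card K = nat (2 * m) ^ card B"
    using B(1) by (simp_all add: K_def finite_PiE card_PiE)
  have "graph_over e g \<inter> cball c \<rho> \<subseteq> \<Union>(Q ` K)"
  proof
    fix y assume "y \<in> graph_over e g \<inter> cball c \<rho>"
    then show "y \<in> \<Union>(Q ` K)"
      using grid_cell_exists[of c y \<rho> \<epsilon> B] \<open>0 < \<epsilon>\<close> B(3) by (auto simp: Q_def K_def m_def)
  qed
  moreover have "bounded (Q k) \<and> diameter (Q k) \<le> (1 + L) * sqrt (card B) * \<epsilon>" for k
  proof -
    have close: "norm (y - z) \<le> (1 + L) * sqrt (card B) * \<epsilon>" if "y \<in> Q k" "z \<in> Q k" for y z
    proof (rule graph_over_dist_le[OF \<open>norm e = 1\<close> lip B(2)])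
      show "\<bar>(y - z) \<bullet> i\<bar> \<le> \<epsilon>" if "i \<in> B" for i
      proof -
        have "k i * \<epsilon> \<le> (y - c) \<bullet> i" "(y - c) \<bullet> i \<le> (k i + 1) * \<epsilon>"
          "k i * \<epsilon> \<le> (z - c) \<bullet> i" "(z - c) \<bullet> i \<le> (k i + 1) * \<epsilon>"
          using \<open>y \<in> Q k\<close> \<open>z \<in> Q k\<close> that by (auto simp: Q_def)
        moreover have "(y - z) \<bullet> i = (y - c) \<bullet> i - (z - c) \<bullet> i"
          by (simp add: inner_diff_left)
        ultimately show ?thesis
          by (simp add: abs_le_iff algebra_simps)
      qed
    qed (use that \<open>0 < \<epsilon>\<close> in \<open>auto simp: Q_def\<close>)
    have "bounded (Q k)"
      unfolding bounded_two_points using close by (metis dist_norm)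
    moreover have "diameter (Q k) \<le> (1 + L) * sqrt (card B) * \<epsilon>"
      using close lipschitz_on_nonneg[OF lip] \<open>0 < \<epsilon>\<close> by (intro diameter_le) auto
    ultimately show ?thesis ..
  qed
  ultimately show thesis
    using that[of "Q ` K"] \<open>finite K\<close> card_image_le[OF \<open>finite K\<close>, of Q] \<open>card K = _\<close> by auto
qed

lemma graph_over_fine_cover_bound:
  fixes e c :: "'a::euclidean_space"
  assumes "DIM('a) \<ge> 2" "norm e = 1" and lip: "L-lipschitz_on UNIV g" and "0 < \<rho>"
  defines "s \<equiv> real DIM('a) - 1"
  shows "fine_cover_bound s (graph_over e g \<inter> cball c \<rho>)
           (hausdorff_normalization s * (6 * (1 + L) * sqrt s) powr s * \<rho> powr s)"
  unfolding fine_cover_bound_def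
proof (intro allI impI)
  fix \<delta> :: real assume "0 < \<delta>"
  obtain B where B: "finite B" "card B = DIM('a) - 1"
    "\<And>w. w \<bullet> w = (w \<bullet> e)\<^sup>2 + (\<Sum>i\<in>B. (w \<bullet> i)\<^sup>2)" "\<And>i. i \<in> B \<Longrightarrow> norm i = 1"
    using unit_vector_orthonormal_complement[OF \<open>norm e = 1\<close>] by metis
  have card_B: "real (card B) = s" "1 \<le> s"
    using B(2) \<open>DIM('a) \<ge> 2\<close> by (simp_all add: s_def)
  define hn where "hn = hausdorff_normalization s"
  have "0 < hn"
    using hausdorff_normalization_pos card_B by (simp add: hn_def)
  define D0 where "D0 = (1 + L) * sqrt s"
  have "0 < D0"
    using lipschitz_on_nonneg[OF lip] card_B by (simp add: D0_def)
  define \<epsilon> where "\<epsilon> = min \<rho> (\<delta> / D0)"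
  have "0 < \<epsilon>" "\<epsilon> \<le> \<rho>" "D0 * \<epsilon> \<le> \<delta>"
    using \<open>0 < \<rho>\<close> \<open>0 < \<delta>\<close> \<open>0 < D0\<close> by (auto simp: \<epsilon>_def min_def field_simps)
  define m where "m = \<lceil>\<rho> / \<epsilon>\<rceil> + 1"
  have "0 < \<rho> / \<epsilon>"
    using \<open>0 < \<rho>\<close> \<open>0 < \<epsilon>\<close> by simp
  then have "1 \<le> m"
    by (simp add: m_def)
  have "m * \<epsilon> \<le> 3 * \<rho>"
    unfolding m_def using \<open>0 < \<epsilon>\<close> \<open>\<epsilon> \<le> \<rho>\<close> by (rule ceiling_divide_plus_one_mult_le)
  obtain F where F: "finite F" "card F \<le> nat (2 * m) ^ card B" "graph_over e g \<inter> cball c \<rho> \<subseteq> \<Union>F"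
    "\<And>S. S \<in> F \<Longrightarrow> bounded S \<and> diameter S \<le> D0 * \<epsilon>"
    using graph_over_cells[OF \<open>norm e = 1\<close> lip \<open>0 < \<epsilon>\<close> B(1,3,4)] card_B
    unfolding m_def D0_def by (metis mult.assoc)
  have "(\<Sum>S\<in>F. hn * diameter S powr s) \<le> card F * (hn * (D0 * \<epsilon>) powr s)"
    using F(4) \<open>0 < hn\<close> card_B
    by (intro sum_bounded_above mult_left_mono powr_mono2) (auto intro: diameter_ge_0)
  also have "\<dots> \<le> (2 * m) ^ card B * (hn * (D0 * \<epsilon>) powr s)"
    using of_nat_mono[OF F(2), where 'a = real] \<open>1 \<le> m\<close> \<open>0 < hn\<close> by (intro mult_right_mono) simp_all
  also have "\<dots> = hn * (2 * m * D0 * \<epsilon>) powr s"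
    using \<open>1 \<le> m\<close> \<open>0 < D0\<close> \<open>0 < \<epsilon>\<close> card_B by (simp add: powr_mult powr_realpow[symmetric])
  also have "\<dots> \<le> hn * (6 * D0 * \<rho>) powr s"
    using \<open>m * \<epsilon> \<le> 3 * \<rho>\<close> \<open>1 \<le> m\<close> \<open>0 < D0\<close> \<open>0 < \<epsilon>\<close> \<open>0 < hn\<close> card_B
    by (intro mult_left_mono powr_mono2) (auto simp: algebra_simps)
  also have "\<dots> = hn * (6 * (1 + L) * sqrt s) powr s * \<rho> powr s"
    using powr_mult[of "6 * D0" \<rho> s] \<open>0 < D0\<close> \<open>0 < \<rho>\<close> by (simp only: D0_def mult.assoc)
  finally show "\<exists>F. finite F \<and> graph_over e g \<inter> cball c \<rho> \<subseteq> \<Union>F \<and> (\<forall>S\<in>F. diameter S \<le> \<delta>) \<and>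
      (\<Sum>S\<in>F. hausdorff_normalization s * diameter S powr s)
        \<le> hausdorff_normalization s * (6 * (1 + L) * sqrt s) powr s * \<rho> powr s"
    using F \<open>D0 * \<epsilon> \<le> \<delta>\<close> unfolding hn_def by (intro exI[of _ F]) force
qed

lemma frontier_subset_graph_over:
  fixes \<Omega> :: "'a::euclidean_space set"
  assumes "open \<Omega>" and lip: "L-lipschitz_on UNIV g"
    and chart: "\<Omega> \<inter> ball x r = {y \<in> ball x r. y \<bullet> e < g (y - (y \<bullet> e) *\<^sub>R e)}"
  shows "frontier \<Omega> \<inter> ball x r \<subseteq> graph_over e g"
proof
  fix y assume y: "y \<in> frontier \<Omega> \<inter> ball x r"
  define h where "h z = g (z - (z \<bullet> e) *\<^sub>R e) - z \<bullet> e" for z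
  have "continuous_on UNIV h"
    unfolding h_def
    by (intro continuous_intros continuous_on_compose2[OF lipschitz_on_continuous_on[OF lip]]) auto
  have "y \<notin> \<Omega>" "y \<in> closure \<Omega>"
    using y \<open>open \<Omega>\<close> by (auto simp: frontier_def interior_open)
  then have "\<not> 0 < h y"
    using chart y by (auto simp: h_def)
  moreover have "\<not> h y < 0"
  proof
    assume "h y < 0"
    define V where "V = ball x r \<inter> h -` {..<0}"
    have "open V"
      using open_vimage[OF open_lessThan \<open>continuous_on UNIV h\<close>] by (simp add: V_def open_Int)
    moreover have "V \<inter> \<Omega> = {}"
    proof -
      have "V \<inter> \<Omega> \<subseteq> \<Omega> \<inter> ball x r"
        by (auto simp: V_def)
      then show ?thesis
        using chart by (auto simp: V_def h_def)
    qed
    ultimately have "V \<inter> closure \<Omega> = {}"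
      by (simp add: open_Int_closure_eq_empty)
    then show False
      using \<open>y \<in> closure \<Omega>\<close> \<open>h y < 0\<close> y by (auto simp: V_def)
  qed
  ultimately show "y \<in> graph_over e g"
    by (simp add: graph_over_def h_def)
qed

lemma lipschitz_boundary_charts:
  fixes \<Omega> :: "'a::euclidean_space set"
  assumes "lipschitz_boundary \<Omega>"
  obtains E R Lip G where "\<And>x. x \<in> frontier \<Omega> \<Longrightarrow> norm (E x) = 1 \<and> 0 < R x \<and> (Lip x)-lipschitz_on UNIV (G x) \<and>
      \<Omega> \<inter> ball x (R x) = {y \<in> ball x (R x). y \<bullet> E x < G x (y - (y \<bullet> E x) *\<^sub>R E x)}"
proof -
  define chart where "chart x e r L g \<longleftrightarrow> norm e = 1 \<and> 0 < r \<and> L-lipschitz_on UNIV g \<and>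
      \<Omega> \<inter> ball x r = {y \<in> ball x r. y \<bullet> e < g (y - (y \<bullet> e) *\<^sub>R e)}" for x e r L g
  have "\<forall>x\<in>frontier \<Omega>. \<exists>e r L g. chart x e r L g"
    using assms unfolding lipschitz_boundary_def chart_def by blast
  then obtain E R Lip G where "\<And>x. x \<in> frontier \<Omega> \<Longrightarrow> chart x (E x) (R x) (Lip x) (G x)"
    by metis
  then show thesis
    using that unfolding chart_def by blast
qed

lemma fine_cover_bound_small_ball:
  assumes "finite X" "\<Gamma> \<subseteq> (\<Union>x\<in>X. ball x (R x / 2))" "y \<in> \<Gamma>" "0 < \<rho>" "\<And>x. x \<in> X \<Longrightarrow> \<rho> \<le> R x / 2"
    and local: "\<And>x c \<rho>. x \<in> X \<Longrightarrow> 0 < \<rho> \<Longrightarrow> fine_cover_bound s (\<Gamma> \<inter> ball x (R x) \<inter> cball c \<rho>) (B x * \<rho> powr s)"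
    and "\<And>x. 0 \<le> B x"
  shows "fine_cover_bound s (\<Gamma> \<inter> cball y \<rho>) ((\<Sum>x\<in>X. B x) * \<rho> powr s)"
proof -
  obtain x where x: "x \<in> X" "dist x y < R x / 2"
    using assms(2,3) by auto
  have "cball y \<rho> \<subseteq> ball x (R x)"
  proof
    fix z assume "z \<in> cball y \<rho>"
    then have "dist x z \<le> dist x y + dist y z" "dist y z \<le> \<rho>"
      by (auto intro: dist_triangle)
    then show "z \<in> ball x (R x)"
      using x assms(5)[OF x(1)] by simp
  qed
  then have "\<Gamma> \<inter> cball y \<rho> \<subseteq> \<Gamma> \<inter> ball x (R x) \<inter> cball y \<rho>"
    by blast
  moreover have "B x * \<rho> powr s \<le> (\<Sum>x\<in>X. B x) * \<rho> powr s"
    using x(1) \<open>finite X\<close> \<open>\<And>x. 0 \<le> B x\<close> by (intro mult_right_mono member_le_sum) auto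
  ultimately show ?thesis
    by (rule fine_cover_bound_mono[OF local[OF x(1) \<open>0 < \<rho>\<close>]])
qed

lemma fine_cover_bound_finite_balls:
  assumes "finite X" "\<Gamma> \<subseteq> (\<Union>x\<in>X. ball x (R x / 2))" "0 \<le> s" "\<And>x. x \<in> X \<Longrightarrow> 0 < R x"
    and local: "\<And>x c \<rho>. x \<in> X \<Longrightarrow> 0 < \<rho> \<Longrightarrow> fine_cover_bound s (\<Gamma> \<inter> ball x (R x) \<inter> cball c \<rho>) (B x * \<rho> powr s)"
  shows "fine_cover_bound s \<Gamma> (\<Sum>x\<in>X. B x * (R x / 2) powr s)"
proof -
  have "fine_cover_bound s (\<Union>x\<in>X. \<Gamma> \<inter> ball x (R x) \<inter> cball x (R x / 2)) (\<Sum>x\<in>X. B x * (R x / 2) powr s)"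
    using assms(1,3,4) local by (intro fine_cover_bound_UN) auto
  moreover have "\<Gamma> \<subseteq> (\<Union>x\<in>X. \<Gamma> \<inter> ball x (R x) \<inter> cball x (R x / 2))"
    using assms(2,4) by force
  ultimately show ?thesis
    by (rule fine_cover_bound_mono) simp
qed

text \<open>
  Balls of radius at most \<open>r0\<close> lie in a single chart; larger balls are covered by the bound
  for all of \<open>\<Gamma>\<close>.
\<close>

lemma compact_upper_regular_of_local:
  fixes \<Gamma> :: "'a::metric_space set"
  assumes "compact \<Gamma>" "0 \<le> s" "\<And>x. x \<in> \<Gamma> \<Longrightarrow> 0 < R x" "\<And>x. 0 \<le> B x"
    and local: "\<And>x c \<rho>. x \<in> \<Gamma> \<Longrightarrow> 0 < \<rho> \<Longrightarrow> fine_cover_bound s (\<Gamma> \<inter> ball x (R x) \<inter> cball c \<rho>) (B x * \<rho> powr s)"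
  shows "\<exists>A>0. \<forall>y\<in>\<Gamma>. \<forall>\<rho>>0. fine_cover_bound s (\<Gamma> \<inter> cball y \<rho>) (A * \<rho> powr s)"
proof -
  have "\<Gamma> \<subseteq> (\<Union>x\<in>\<Gamma>. ball x (R x / 2))"
    using assms(3) by force
  then obtain X where X: "X \<subseteq> \<Gamma>" "finite X" "\<Gamma> \<subseteq> (\<Union>x\<in>X. ball x (R x / 2))"
    using compactE_image[OF \<open>compact \<Gamma>\<close>, of \<Gamma> "\<lambda>x. ball x (R x / 2)"] by blast
  define r0 where "r0 = Min (insert 1 ((\<lambda>x. R x / 2) ` X))"
  have "0 < r0"
    using X assms(3) by (auto simp: r0_def)
  have r0_le: "r0 \<le> R x / 2" if "x \<in> X" for x
    unfolding r0_def using X(2) that by (intro Min_le) auto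
  define H where "H = (\<Sum>x\<in>X. B x * (R x / 2) powr s)"
  have whole: "fine_cover_bound s \<Gamma> H"
    unfolding H_def using X assms(2,3) local by (intro fine_cover_bound_finite_balls) auto
  define A where "A = (\<Sum>x\<in>X. B x) + H / r0 powr s + 1"
  have "0 \<le> (\<Sum>x\<in>X. B x)" "0 \<le> H"
    unfolding H_def using assms(4) by (simp_all add: sum_nonneg)
  have "fine_cover_bound s (\<Gamma> \<inter> cball y \<rho>) (A * \<rho> powr s)" if "y \<in> \<Gamma>" "0 < \<rho>" for y \<rho>
  proof (cases "\<rho> \<le> r0")
    case True
    have "fine_cover_bound s (\<Gamma> \<inter> cball y \<rho>) ((\<Sum>x\<in>X. B x) * \<rho> powr s)"
    proof (rule fine_cover_bound_small_ball[OF X(2,3) that])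
      show "\<rho> \<le> R x / 2" if "x \<in> X" for x
        using r0_le[OF that] True by simp
    qed (use X(1) local assms(4) in auto)
    moreover have "(\<Sum>x\<in>X. B x) * \<rho> powr s \<le> A * \<rho> powr s"
      using \<open>0 \<le> H\<close> \<open>0 < r0\<close> by (intro mult_right_mono) (auto simp: A_def)
    ultimately show ?thesis
      by (rule fine_cover_bound_mono[OF _ order_refl])
  next
    case False
    have "H \<le> H / r0 powr s * \<rho> powr s"
      using False \<open>0 < r0\<close> \<open>0 \<le> H\<close> \<open>0 \<le> s\<close> by (simp add: field_simps mult_left_mono powr_mono2)
    also have "\<dots> \<le> A * \<rho> powr s"
      using \<open>0 \<le> (\<Sum>x\<in>X. B x)\<close> by (intro mult_right_mono) (auto simp: A_def)
    finally show ?thesis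
      by (rule fine_cover_bound_mono[OF whole, rotated]) auto
  qed
  moreover have "0 < A"
    using \<open>0 \<le> (\<Sum>x\<in>X. B x)\<close> \<open>0 \<le> H\<close> \<open>0 < r0\<close> by (simp add: A_def add_nonneg_pos)
  ultimately show ?thesis
    by blast
qed

lemma lipschitz_boundary_upper_regular:
  fixes \<Omega> :: "'a::euclidean_space set"
  assumes "DIM('a) \<ge> 2" "open \<Omega>" "bounded \<Omega>" "lipschitz_boundary \<Omega>"
  defines "s \<equiv> real DIM('a) - 1"
  shows "\<exists>A>0. \<forall>y\<in>frontier \<Omega>. \<forall>\<rho>>0. hausdorff_measure s (frontier \<Omega> \<inter> cball y \<rho>) \<le> ennreal (A * \<rho> powr s)"
proof -
  have "1 \<le> s"
    using \<open>DIM('a) \<ge> 2\<close> by (simp add: s_def)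
  obtain E R Lip G where chart: "\<And>x. x \<in> frontier \<Omega> \<Longrightarrow> norm (E x) = 1 \<and> 0 < R x \<and> (Lip x)-lipschitz_on UNIV (G x) \<and>
      \<Omega> \<inter> ball x (R x) = {y \<in> ball x (R x). y \<bullet> E x < G x (y - (y \<bullet> E x) *\<^sub>R E x)}"
    using lipschitz_boundary_charts[OF \<open>lipschitz_boundary \<Omega>\<close>] by blast
  define B where "B x = hausdorff_normalization s * (6 * (1 + Lip x) * sqrt s) powr s" for x
  have "fine_cover_bound s (frontier \<Omega> \<inter> ball x (R x) \<inter> cball c \<rho>) (B x * \<rho> powr s)"
    if "x \<in> frontier \<Omega>" "0 < \<rho>" for x c \<rho>
  proof -
    have "fine_cover_bound s (graph_over (E x) (G x) \<inter> cball c \<rho>) (B x * \<rho> powr s)"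
      using graph_over_fine_cover_bound[OF \<open>DIM('a) \<ge> 2\<close>] chart[OF that(1)] that(2)
      unfolding B_def s_def by (simp add: mult.assoc)
    moreover have "frontier \<Omega> \<inter> ball x (R x) \<inter> cball c \<rho> \<subseteq> graph_over (E x) (G x) \<inter> cball c \<rho>"
      using frontier_subset_graph_over[OF \<open>open \<Omega>\<close>] chart[OF that(1)] by blast
    ultimately show ?thesis
      by (rule fine_cover_bound_mono[OF _ _ order_refl])
  qed
  moreover have "0 \<le> B x" for x
    using hausdorff_normalization_pos \<open>1 \<le> s\<close> by (simp add: B_def less_imp_le)
  moreover have "0 < R x" if "x \<in> frontier \<Omega>" for x
    using chart[OF that] by blast
  ultimately obtain A where "0 < A"
    and A: "\<forall>y\<in>frontier \<Omega>. \<forall>\<rho>>0. fine_cover_bound s (frontier \<Omega> \<inter> cball y \<rho>) (A * \<rho> powr s)"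
    using compact_upper_regular_of_local[OF compact_frontier_bounded[OF \<open>bounded \<Omega>\<close>], of s R B] \<open>1 \<le> s\<close>
    by auto
  have "hausdorff_measure s (frontier \<Omega> \<inter> cball y \<rho>) \<le> ennreal (A * \<rho> powr s)"
    if "y \<in> frontier \<Omega>" "0 < \<rho>" for y \<rho>
    using A that \<open>1 \<le> s\<close> by (intro hausdorff_measure_le_fine_cover_bound) auto
  then show ?thesis
    using \<open>0 < A\<close> by blast
qed

section \<open>The surface measure and the tail of the Riesz kernel\<close>

lemma space_surface_measure [simp]: "space (surface_measure \<Gamma>) = \<Gamma>"
  by (simp add: surface_measure_def space_measure_of_conv)

lemma borel_Int_in_sets_surface_measure:
  assumes "\<Gamma> \<in> sets borel" "A \<in> sets borel"
  shows "A \<inter> \<Gamma> \<in> sets (surface_measure \<Gamma>)"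
proof -
  have "sets (surface_measure \<Gamma>) = sigma_sets \<Gamma> {A. A \<subseteq> \<Gamma> \<and> A \<in> sets borel}"
    by (simp add: surface_measure_def sets_measure_of_conv) blast
  then show ?thesis
    using assms by (auto intro: sigma_sets.Basic)
qed

lemma measurable_ident_surface_measure:
  assumes "\<Gamma> \<in> sets borel"
  shows "(\<lambda>x. x) \<in> measurable (surface_measure \<Gamma>) borel"
  using borel_Int_in_sets_surface_measure[OF assms] by (intro measurableI) (auto simp: Int_commute)

lemma emeasure_surface_measure_le_hausdorff:
  "emeasure (surface_measure (\<Gamma>::'a::euclidean_space set)) A \<le> hausdorff_measure (real DIM('a) - 1) A"
  by (simp add: surface_measure_def emeasure_measure_of_conv)

lemma surface_measure_upper_regular:
  fixes \<Omega> :: "'a::euclidean_space set"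
  assumes "DIM('a) \<ge> 2" "bounded_lipschitz_domain \<Omega>"
  shows "\<exists>A>0. \<forall>y\<in>frontier \<Omega>. \<forall>\<rho>>0.
    emeasure (surface_measure (frontier \<Omega>)) (cball y \<rho> \<inter> frontier \<Omega>) \<le> ennreal (A * \<rho> powr (real DIM('a) - 1))"
proof -
  obtain A where A: "0 < A" "\<forall>y\<in>frontier \<Omega>. \<forall>\<rho>>0.
      hausdorff_measure (real DIM('a) - 1) (frontier \<Omega> \<inter> cball y \<rho>) \<le> ennreal (A * \<rho> powr (real DIM('a) - 1))"
    using lipschitz_boundary_upper_regular[OF assms(1)] assms(2) unfolding bounded_lipschitz_domain_def by blast
  have "emeasure (surface_measure (frontier \<Omega>)) (cball y \<rho> \<inter> frontier \<Omega>) \<le> ennreal (A * \<rho> powr (real DIM('a) - 1))"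
    if "y \<in> frontier \<Omega>" "0 < \<rho>" for y \<rho>
  proof -
    have "emeasure (surface_measure (frontier \<Omega>)) (cball y \<rho> \<inter> frontier \<Omega>)
        \<le> hausdorff_measure (real DIM('a) - 1) (frontier \<Omega> \<inter> cball y \<rho>)"
      using emeasure_surface_measure_le_hausdorff by (simp add: Int_commute)
    also have "\<dots> \<le> ennreal (A * \<rho> powr (real DIM('a) - 1))"
      using A(2) that by blast
    finally show ?thesis .
  qed
  then show ?thesis
    using A(1) by blast
qed

lemma finite_measure_surface_measure:
  fixes \<Omega> :: "'a::euclidean_space set"
  assumes "DIM('a) \<ge> 2" "bounded_lipschitz_domain \<Omega>"
  shows "finite_measure (surface_measure (frontier \<Omega>))"
proof (cases "frontier \<Omega> = {}")
  case True
  then show ?thesis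
    by (intro finite_measureI) simp
next
  case False
  then obtain y where "y \<in> frontier \<Omega>" by blast
  obtain A where A: "\<forall>y\<in>frontier \<Omega>. \<forall>\<rho>>0.
      emeasure (surface_measure (frontier \<Omega>)) (cball y \<rho> \<inter> frontier \<Omega>) \<le> ennreal (A * \<rho> powr (real DIM('a) - 1))"
    using surface_measure_upper_regular[OF assms] by blast
  have "bounded (frontier \<Omega>)"
    using assms(2) compact_frontier_bounded compact_imp_bounded by (auto simp: bounded_lipschitz_domain_def)
  define R where "R = diameter (frontier \<Omega>) + 1"
  have "frontier \<Omega> \<subseteq> cball y R"
    using diameter_bounded_bound[OF \<open>bounded (frontier \<Omega>)\<close> \<open>y \<in> frontier \<Omega>\<close>] by (force simp: R_def)
  moreover have "0 < R"
    using diameter_ge_0[OF \<open>bounded (frontier \<Omega>)\<close>] by (simp add: R_def)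
  ultimately have "emeasure (surface_measure (frontier \<Omega>)) (frontier \<Omega>) \<le> ennreal (A * R powr (real DIM('a) - 1))"
    using A \<open>y \<in> frontier \<Omega>\<close> by (metis inf.absorb_iff2)
  then show ?thesis
    by (intro finite_measureI) (auto simp: top_unique)
qed

lemma ex_dyadic_scale:
  fixes d \<delta> :: real
  assumes "0 < \<delta>" "\<delta> \<le> d"
  shows "\<exists>k::nat. 2 ^ k * \<delta> \<le> d \<and> d \<le> 2 * (2 ^ k * \<delta>)"
proof -
  define k where "k = nat \<lfloor>log 2 (d / \<delta>)\<rfloor>"
  have "1 \<le> d / \<delta>"
    using assms by simp
  then have "real k \<le> log 2 (d / \<delta>)" "log 2 (d / \<delta>) \<le> real k + 1"
    by (simp_all add: k_def)
  then have "2 powr real k \<le> d / \<delta>" "d / \<delta> \<le> 2 powr (real k + 1)"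
    using \<open>1 \<le> d / \<delta>\<close> by (simp_all add: le_log_iff log_le_iff)
  then show ?thesis
    using assms by (intro exI[of _ k]) (simp add: powr_add powr_realpow field_simps)
qed

lemma dyadic_shell_term_eq:
  fixes \<delta> A s \<sigma> :: real
  assumes "0 < \<delta>"
  shows "(2 ^ k * \<delta>) powr (-(s + 2 * \<sigma>)) * (A * (2 * (2 ^ k * \<delta>)) powr s)
       = A * 2 powr s * \<delta> powr (-2 * \<sigma>) * (2 powr (-2 * \<sigma>)) ^ k"
proof -
  define a where "a = 2 ^ k * \<delta>"
  have "0 < a"
    using assms by (simp add: a_def)
  have "a powr (-2 * \<sigma>) = (2 powr (-2 * \<sigma>)) ^ k * \<delta> powr (-2 * \<sigma>)"
    using assms by (simp add: a_def powr_mult powr_realpow[symmetric] powr_powr mult.commute)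
  moreover have "a powr (-(s + 2 * \<sigma>)) * a powr s = a powr (-2 * \<sigma>)"
    using \<open>0 < a\<close> by (simp add: powr_add[symmetric])
  ultimately show ?thesis
    using \<open>0 < a\<close> unfolding a_def[symmetric] by (simp add: powr_mult algebra_simps)
qed

lemma tail_kernel_le_dyadic_sum:
  fixes x y :: "'a::metric_space"
  assumes "0 < \<delta>" "0 \<le> t"
  shows "indicator {y. \<delta> \<le> dist x y} y * ennreal (1 / dist x y powr t)
           \<le> (\<Sum>k. ennreal ((2 ^ k * \<delta>) powr (-t)) * indicator (cball x (2 * (2 ^ k * \<delta>))) y)"
proof (cases "\<delta> \<le> dist x y")
  case True
  then obtain k where k: "2 ^ k * \<delta> \<le> dist x y" "dist x y \<le> 2 * (2 ^ k * \<delta>)"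
    using ex_dyadic_scale[OF \<open>0 < \<delta>\<close>] by blast
  have "0 < 2 ^ k * \<delta>"
    using \<open>0 < \<delta>\<close> by simp
  then have "(2 ^ k * \<delta>) powr t \<le> dist x y powr t"
    using k(1) \<open>0 \<le> t\<close> by (intro powr_mono2) auto
  then have "1 / dist x y powr t \<le> 1 / (2 ^ k * \<delta>) powr t"
    using \<open>0 < 2 ^ k * \<delta>\<close> k(1) by (intro divide_left_mono mult_pos_pos) auto
  also have "\<dots> = (2 ^ k * \<delta>) powr (-t)"
    by (rule powr_minus_divide[symmetric])
  finally have "indicator {y. \<delta> \<le> dist x y} y * ennreal (1 / dist x y powr t)
      \<le> ennreal ((2 ^ k * \<delta>) powr (-t)) * indicator (cball x (2 * (2 ^ k * \<delta>))) y"
    using True k(2) by (simp add: ennreal_leI)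
  also have "\<dots> \<le> (\<Sum>k. ennreal ((2 ^ k * \<delta>) powr (-t)) * indicator (cball x (2 * (2 ^ k * \<delta>))) y)"
    using sum_le_suminf[OF summableI, of "{k}"] by simp
  finally show ?thesis .
qed simp

lemma tail_integral_le:
  fixes M :: "'a::metric_space measure" and x :: 'a
  assumes regular: "\<And>\<rho>. 0 < \<rho> \<Longrightarrow> emeasure M (cball x \<rho> \<inter> space M) \<le> ennreal (A * \<rho> powr s)"
    and balls: "\<And>\<rho>. cball x \<rho> \<inter> space M \<in> sets M"
    and "0 \<le> A" "0 \<le> s" "0 < \<sigma>" "0 < \<delta>"
  shows "(\<integral>\<^sup>+y. indicator {y. \<delta> \<le> dist x y} y * ennreal (1 / dist x y powr (s + 2 * \<sigma>)) \<partial>M)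
           \<le> ennreal (A * 2 powr s / (1 - 2 powr (-2 * \<sigma>)) * \<delta> powr (-2 * \<sigma>))"
proof -
  define q :: real where "q = 2 powr (-2 * \<sigma>)"
  have "0 < q" "q < 1"
    using \<open>0 < \<sigma>\<close> by (simp_all add: q_def powr_less_one)
  define a where "a k = 2 ^ k * \<delta>" for k :: nat
  define F where "F k y = ennreal (a k powr (-(s + 2 * \<sigma>))) * indicator (cball x (2 * a k) \<inter> space M) y"
    for k y
  have "indicator {y. \<delta> \<le> dist x y} y * ennreal (1 / dist x y powr (s + 2 * \<sigma>)) \<le> (\<Sum>k. F k y)"
    if "y \<in> space M" for y
    using tail_kernel_le_dyadic_sum[OF \<open>0 < \<delta>\<close>, of "s + 2 * \<sigma>" x y] \<open>0 \<le> s\<close> \<open>0 < \<sigma>\<close> that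
    by (simp add: F_def a_def indicator_inter_arith)
  then have "(\<integral>\<^sup>+y. indicator {y. \<delta> \<le> dist x y} y * ennreal (1 / dist x y powr (s + 2 * \<sigma>)) \<partial>M)
      \<le> (\<integral>\<^sup>+y. (\<Sum>k. F k y) \<partial>M)"
    by (intro nn_integral_mono)
  also have "\<dots> = (\<Sum>k. ennreal (a k powr (-(s + 2 * \<sigma>))) * emeasure M (cball x (2 * a k) \<inter> space M))"
    using balls by (simp add: F_def nn_integral_suminf nn_integral_cmult_indicator)
  also have "\<dots> \<le> (\<Sum>k. ennreal (A * 2 powr s * \<delta> powr (-2 * \<sigma>) * q ^ k))"
  proof (intro suminf_le allI)
    fix k
    have "0 < a k"
      using \<open>0 < \<delta>\<close> by (simp add: a_def)
    then have "ennreal (a k powr (-(s + 2 * \<sigma>))) * emeasure M (cball x (2 * a k) \<inter> space M)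
        \<le> ennreal (a k powr (-(s + 2 * \<sigma>))) * ennreal (A * (2 * a k) powr s)"
      using regular by (intro mult_left_mono) auto
    also have "\<dots> = ennreal (A * 2 powr s * \<delta> powr (-2 * \<sigma>) * q ^ k)"
      using \<open>0 \<le> A\<close> dyadic_shell_term_eq[OF \<open>0 < \<delta>\<close>, of k s \<sigma> A]
      by (simp add: ennreal_mult[symmetric] a_def q_def)
    finally show "ennreal (a k powr (-(s + 2 * \<sigma>))) * emeasure M (cball x (2 * a k) \<inter> space M)
        \<le> ennreal (A * 2 powr s * \<delta> powr (-2 * \<sigma>) * q ^ k)" .
  qed auto
  also have "\<dots> = ennreal (\<Sum>k. A * 2 powr s * \<delta> powr (-2 * \<sigma>) * q ^ k)"
    using \<open>0 < q\<close> \<open>q < 1\<close> \<open>0 \<le> A\<close> by (intro suminf_ennreal2 summable_mult summable_geometric) auto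
  also have "(\<Sum>k. A * 2 powr s * \<delta> powr (-2 * \<sigma>) * q ^ k) = A * 2 powr s / (1 - q) * \<delta> powr (-2 * \<sigma>)"
    using \<open>0 < q\<close> \<open>q < 1\<close> by (simp add: suminf_mult suminf_geometric summable_geometric)
  finally show ?thesis
    by (simp add: q_def)
qed

lemma surface_tail_integral_bound:
  fixes \<Omega> :: "'a::euclidean_space set"
  assumes "DIM('a) \<ge> 2" "bounded_lipschitz_domain \<Omega>" "0 < \<sigma>"
  shows "\<exists>K\<ge>0. \<forall>x\<in>frontier \<Omega>. \<forall>\<delta>>0.
    (\<integral>\<^sup>+y. indicator {y. \<delta> \<le> dist x y} y * ennreal (1 / dist x y powr (real DIM('a) - 1 + 2 * \<sigma>))
       \<partial>surface_measure (frontier \<Omega>)) \<le> ennreal (K * \<delta> powr (-2 * \<sigma>))"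
proof -
  define s where "s = real DIM('a) - 1"
  obtain A where A: "0 < A" "\<forall>y\<in>frontier \<Omega>. \<forall>\<rho>>0.
      emeasure (surface_measure (frontier \<Omega>)) (cball y \<rho> \<inter> frontier \<Omega>) \<le> ennreal (A * \<rho> powr s)"
    using surface_measure_upper_regular[OF assms(1,2)] unfolding s_def by blast
  have balls: "cball x \<rho> \<inter> frontier \<Omega> \<in> sets (surface_measure (frontier \<Omega>))" for x \<rho>
    by (intro borel_Int_in_sets_surface_measure) auto
  have "2 powr (-2 * \<sigma>) < 1"
    using \<open>0 < \<sigma>\<close> by (simp add: powr_less_one)
  then have "0 \<le> A * 2 powr s / (1 - 2 powr (-2 * \<sigma>))"
    using A(1) by simp
  moreover have "0 \<le> s"
    using assms(1) by (simp add: s_def)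
  ultimately show ?thesis
    using tail_integral_le[where M = "surface_measure (frontier \<Omega>)", OF _ _ _ _ \<open>0 < \<sigma>\<close>] A balls
    unfolding s_def by (intro exI[of _ "A * 2 powr s / (1 - 2 powr (-2 * \<sigma>))"]) (simp add: s_def)
qed

section \<open>Localization of the Sobolev--Slobodeckij norm\<close>

definition gagliardo_sq :: "'a::metric_space measure \<Rightarrow> real \<Rightarrow> ('a \<Rightarrow> real) \<Rightarrow> 'a set \<Rightarrow> ennreal" where
  "gagliardo_sq M t u \<omega> = (\<integral>\<^sup>+p. indicator (\<omega> \<times> \<omega>) p *
     ennreal ((u (fst p) - u (snd p))\<^sup>2 / dist (fst p) (snd p) powr t) \<partial>(M \<Otimes>\<^sub>M M))"

definition L2_sq_on :: "'a measure \<Rightarrow> ('a \<Rightarrow> real) \<Rightarrow> 'a set \<Rightarrow> ennreal" where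
  "L2_sq_on M u \<omega> = (\<integral>\<^sup>+x. indicator \<omega> x * ennreal ((u x)\<^sup>2) \<partial>M)"

lemma Hs_semi_sq_eq_sum_gagliardo_sq:
  "Hs_semi_sq \<Gamma> \<sigma> D v \<omega>
     = (\<Sum>j<D. gagliardo_sq (surface_measure \<Gamma>) (real DIM('a) - 1 + 2 * \<sigma>) (\<lambda>x. v x j) \<omega>)"
  for \<Gamma> :: "'a::euclidean_space set"
  by (simp add: Hs_semi_sq_def gagliardo_sq_def)

lemma L2_sq_eq_sum_L2_sq_on: "L2_sq \<Gamma> D v \<omega> = (\<Sum>j<D. L2_sq_on (surface_measure \<Gamma>) (\<lambda>x. v x j) \<omega>)"
  by (simp add: L2_sq_def L2_sq_on_def)

text \<open>
  Bound for the Gagliardo integrand at pairs with \<open>x \<in> T\<close> and \<open>y\<close> outside the patch of \<open>T\<close>,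
  where (M4) gives \<open>dist x y \<ge> diameter T / c\<close>.
\<close>

definition far_kernel :: "real \<Rightarrow> real \<Rightarrow> ('a::metric_space \<Rightarrow> real) \<Rightarrow> 'a set \<Rightarrow> 'a \<Rightarrow> 'a \<Rightarrow> ennreal" where
  "far_kernel c t u T x y = indicator T x * ennreal (2 * (u x)\<^sup>2) *
     (indicator {y. diameter T / c \<le> dist x y} y * ennreal (1 / dist x y powr t))"

lemma M4_dist_ge:
  assumes "M4 \<Gamma> c \<T>" "0 < c" "T \<in> \<T>" "x \<in> T" "y \<in> \<Gamma> - patch \<T> T"
  shows "diameter T / c \<le> dist x y"
proof -
  have "\<Gamma> - patch \<T> T \<noteq> {}"
    using assms(5) by blast
  moreover have "diameter T \<le> c * dist_set \<Gamma> T (\<Gamma> - patch \<T> T)"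
    using assms(1,3) by (simp add: M4_def)
  ultimately have "diameter T \<le> c * setdist T (\<Gamma> - patch \<T> T)"
    by (simp add: dist_set_def)
  also have "\<dots> \<le> c * dist x y"
    using setdist_le_dist[OF assms(4,5)] \<open>0 < c\<close> by simp
  finally show ?thesis
    using \<open>0 < c\<close> by (simp add: field_simps)
qed

lemma far_kernel_eq:
  assumes "x \<in> T" "diameter T / c \<le> dist x y" "0 < dist x y"
  shows "far_kernel c t u T x y = ennreal (2 * (u x)\<^sup>2 / dist x y powr t)"
proof -
  have "far_kernel c t u T x y = ennreal (2 * (u x)\<^sup>2) * ennreal (1 / dist x y powr t)"
    using assms by (simp add: far_kernel_def)
  also have "\<dots> = ennreal (2 * (u x)\<^sup>2 / dist x y powr t)"
    using assms(3) by (simp add: ennreal_mult[symmetric])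
  finally show ?thesis .
qed

lemma difference_quotient_le_far_kernels:
  assumes "x \<in> T1" "y \<in> T2" "diameter T1 / c \<le> dist x y" "diameter T2 / c \<le> dist x y" "0 < dist x y"
  shows "ennreal ((u x - u y)\<^sup>2 / dist x y powr t) \<le> far_kernel c t u T1 x y + far_kernel c t u T2 y x"
proof -
  define d where "d = dist x y powr t"
  have "0 < d"
    using \<open>0 < dist x y\<close> by (simp add: d_def)
  have "(u x - u y)\<^sup>2 \<le> 2 * (u x)\<^sup>2 + 2 * (u y)\<^sup>2"
    using zero_le_power2[of "u x + u y"] by (simp add: power2_eq_square algebra_simps)
  then have "(u x - u y)\<^sup>2 / d \<le> 2 * (u x)\<^sup>2 / d + 2 * (u y)\<^sup>2 / d"
    using \<open>0 < d\<close> by (simp add: divide_right_mono add_divide_distrib[symmetric])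
  then have "ennreal ((u x - u y)\<^sup>2 / d) \<le> ennreal (2 * (u x)\<^sup>2 / d + 2 * (u y)\<^sup>2 / d)"
    by (rule ennreal_leI)
  also have "\<dots> = ennreal (2 * (u x)\<^sup>2 / d) + ennreal (2 * (u y)\<^sup>2 / d)"
    using \<open>0 < d\<close> by (intro ennreal_plus) auto
  also have "\<dots> = far_kernel c t u T1 x y + far_kernel c t u T2 y x"
    using far_kernel_eq[of x T1 c y t u] far_kernel_eq[of y T2 c x t u] assms
    by (simp add: d_def dist_commute)
  finally show ?thesis
    by (simp add: d_def)
qed

lemma difference_quotient_split:
  fixes u :: "'a::euclidean_space \<Rightarrow> real" and t :: real
  assumes "finite \<T>" "\<Union>\<T> = \<Gamma>" "\<forall>T\<in>\<T>. 0 < diameter T" "0 < c" "M4 \<Gamma> c \<T>" "x \<in> \<Gamma>" "y \<in> \<Gamma>"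
  defines "f \<equiv> ennreal ((u x - u y)\<^sup>2 / dist x y powr t)"
  shows "f \<le> (\<Sum>T\<in>\<T>. \<Sum>T'\<in>patch_elems \<T> T. indicator ((T \<union> T') \<times> (T \<union> T')) (x, y) * f)
            + (\<Sum>T\<in>\<T>. far_kernel c t u T x y + far_kernel c t u T y x)"
    (is "_ \<le> ?near + ?far")
proof -
  obtain T1 T2 where T: "T1 \<in> \<T>" "x \<in> T1" "T2 \<in> \<T>" "y \<in> T2"
    using assms(2,6,7) by blast
  have near: "f \<le> ?near" if "T \<in> \<T>" "T' \<in> patch_elems \<T> T" "x \<in> T \<union> T'" "y \<in> T \<union> T'" for T T'
  proof -
    have "finite (patch_elems \<T> T)"
      using \<open>finite \<T>\<close> by (simp add: patch_elems_def)
    have "f = indicator ((T \<union> T') \<times> (T \<union> T')) (x, y) * f"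
      using that by simp
    also have "\<dots> \<le> (\<Sum>T'\<in>patch_elems \<T> T. indicator ((T \<union> T') \<times> (T \<union> T')) (x, y) * f)"
      by (rule member_le_sum) (use that \<open>finite (patch_elems \<T> T)\<close> in auto)
    also have "\<dots> \<le> ?near"
      by (rule member_le_sum[where f = "\<lambda>T. \<Sum>T'\<in>patch_elems \<T> T. indicator ((T \<union> T') \<times> (T \<union> T')) (x, y) * f"])
        (use that \<open>finite \<T>\<close> in auto)
    finally show ?thesis .
  qed
  show ?thesis
  proof (cases "y \<in> patch \<T> T1 \<or> x \<in> patch \<T> T2")
    case True
    then have "f \<le> ?near"
      using near T by (auto simp: patch_def)
    then show ?thesis
      by (simp add: add_increasing2)
  next
    case False
    then have far: "diameter T1 / c \<le> dist x y" "diameter T2 / c \<le> dist x y"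
      using M4_dist_ge[OF assms(5,4) T(1,2), of y] M4_dist_ge[OF assms(5,4) T(3,4), of x] assms(6,7)
      by (auto simp: dist_commute)
    moreover have "0 < diameter T1 / c"
      using T assms(3,4) by simp
    ultimately have "f \<le> far_kernel c t u T1 x y + far_kernel c t u T2 y x"
      unfolding f_def using T by (intro difference_quotient_le_far_kernels) auto
    also have "\<dots> \<le> (\<Sum>T\<in>\<T>. far_kernel c t u T x y) + (\<Sum>T\<in>\<T>. far_kernel c t u T y x)"
      using T \<open>finite \<T>\<close> by (intro add_mono member_le_sum) auto
    also have "\<dots> = ?far"
      by (simp add: sum.distrib)
    finally show ?thesis
      by (simp add: add_increasing)
  qed
qed

lemma measurable_fst_snd_borel:
  assumes "(\<lambda>x. x) \<in> measurable M borel"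
  shows "fst \<in> measurable (M \<Otimes>\<^sub>M M) borel" "snd \<in> measurable (M \<Otimes>\<^sub>M M) borel"
  using measurable_compose[OF measurable_fst[of M M] assms] measurable_compose[OF measurable_snd[of M M] assms]
  by simp_all

lemma far_kernel_iterated_integral_le:
  fixes M :: "'a::euclidean_space measure"
  assumes ident: "(\<lambda>x. x) \<in> measurable M borel"
    and u: "u \<in> borel_measurable M" and T: "T \<in> sets M" and "0 \<le> B"
    and tail: "\<And>x. x \<in> T \<Longrightarrow>
      (\<integral>\<^sup>+y. indicator {y. diameter T / c \<le> dist x y} y * ennreal (1 / dist x y powr t) \<partial>M) \<le> ennreal B"
  shows "(\<integral>\<^sup>+x. \<integral>\<^sup>+y. far_kernel c t u T x y \<partial>M \<partial>M) \<le> ennreal (2 * B) * L2_sq_on M u T"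
proof -
  note [measurable] = ident u T
  have "(\<integral>\<^sup>+y. far_kernel c t u T x y \<partial>M) \<le> ennreal (2 * B) * (indicator T x * ennreal ((u x)\<^sup>2))" for x
  proof -
    have "(\<integral>\<^sup>+y. far_kernel c t u T x y \<partial>M) = indicator T x * ennreal (2 * (u x)\<^sup>2) *
        (\<integral>\<^sup>+y. indicator {y. diameter T / c \<le> dist x y} y * ennreal (1 / dist x y powr t) \<partial>M)"
      unfolding far_kernel_def by (rule nn_integral_cmult) measurable
    also have "\<dots> \<le> indicator T x * ennreal (2 * (u x)\<^sup>2) * ennreal B"
      using tail by (cases "x \<in> T") (auto intro: mult_left_mono)
    also have "\<dots> = ennreal (2 * B) * (indicator T x * ennreal ((u x)\<^sup>2))"
      using \<open>0 \<le> B\<close> by (cases "x \<in> T") (simp_all add: ennreal_mult[symmetric] mult_ac)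
    finally show ?thesis .
  qed
  then have "(\<integral>\<^sup>+x. \<integral>\<^sup>+y. far_kernel c t u T x y \<partial>M \<partial>M)
      \<le> (\<integral>\<^sup>+x. ennreal (2 * B) * (indicator T x * ennreal ((u x)\<^sup>2)) \<partial>M)"
    by (intro nn_integral_mono)
  also have "\<dots> = ennreal (2 * B) * L2_sq_on M u T"
    unfolding L2_sq_on_def by (rule nn_integral_cmult) measurable
  finally show ?thesis .
qed

lemma far_kernel_pair_integral_le:
  fixes M :: "'a::euclidean_space measure"
  assumes "sigma_finite_measure M" and ident: "(\<lambda>x. x) \<in> measurable M borel"
    and u: "u \<in> borel_measurable M" and T: "T \<in> sets M" and "0 \<le> B"
    and tail: "\<And>x. x \<in> T \<Longrightarrow>
      (\<integral>\<^sup>+y. indicator {y. diameter T / c \<le> dist x y} y * ennreal (1 / dist x y powr t) \<partial>M) \<le> ennreal B"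
  shows "(\<integral>\<^sup>+p. far_kernel c t u T (fst p) (snd p) + far_kernel c t u T (snd p) (fst p) \<partial>(M \<Otimes>\<^sub>M M))
           \<le> ennreal (4 * B) * L2_sq_on M u T"
proof -
  note [measurable] = ident u T measurable_fst_snd_borel[OF ident]
  interpret pair_sigma_finite M M
    using \<open>sigma_finite_measure M\<close> by (simp add: pair_sigma_finite_def)
  have m1: "(\<lambda>p. far_kernel c t u T (fst p) (snd p)) \<in> borel_measurable (M \<Otimes>\<^sub>M M)"
    and m2: "(\<lambda>p. far_kernel c t u T (snd p) (fst p)) \<in> borel_measurable (M \<Otimes>\<^sub>M M)"
    unfolding far_kernel_def by measurable
  have "(\<integral>\<^sup>+p. far_kernel c t u T (fst p) (snd p) + far_kernel c t u T (snd p) (fst p) \<partial>(M \<Otimes>\<^sub>M M))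
      = (\<integral>\<^sup>+p. far_kernel c t u T (fst p) (snd p) \<partial>(M \<Otimes>\<^sub>M M)) + (\<integral>\<^sup>+p. far_kernel c t u T (snd p) (fst p) \<partial>(M \<Otimes>\<^sub>M M))"
    using m1 m2 by (rule nn_integral_add)
  also have "\<dots> = (\<integral>\<^sup>+x. \<integral>\<^sup>+y. far_kernel c t u T x y \<partial>M \<partial>M) + (\<integral>\<^sup>+x. \<integral>\<^sup>+y. far_kernel c t u T x y \<partial>M \<partial>M)"
    using M1.nn_integral_fst[OF m1] nn_integral_snd[OF m2] by simp
  also have "\<dots> \<le> ennreal (2 * B) * L2_sq_on M u T + ennreal (2 * B) * L2_sq_on M u T"
    using far_kernel_iterated_integral_le[OF ident u T \<open>0 \<le> B\<close> tail] by (intro add_mono)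
  also have "\<dots> = ennreal (4 * B) * L2_sq_on M u T"
    using \<open>0 \<le> B\<close> by (simp flip: distrib_right ennreal_plus)
  finally show ?thesis .
qed

lemma L2_sq_on_Union_le:
  assumes "finite \<T>" "\<And>T. T \<in> \<T> \<Longrightarrow> T \<in> sets M" "u \<in> borel_measurable M"
  shows "L2_sq_on M u (\<Union>\<T>) \<le> (\<Sum>T\<in>\<T>. L2_sq_on M u T)"
proof -
  have "indicator (\<Union>\<T>) x * ennreal ((u x)\<^sup>2) \<le> (\<Sum>T\<in>\<T>. indicator T x * ennreal ((u x)\<^sup>2))" for x
  proof (cases "x \<in> \<Union>\<T>")
    case True
    then obtain T where "T \<in> \<T>" "x \<in> T" by blast
    then have "indicator (\<Union>\<T>) x * ennreal ((u x)\<^sup>2) = indicator T x * ennreal ((u x)\<^sup>2)"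
      using True by simp
    also have "\<dots> \<le> (\<Sum>T\<in>\<T>. indicator T x * ennreal ((u x)\<^sup>2))"
      by (rule member_le_sum) (use \<open>T \<in> \<T>\<close> \<open>finite \<T>\<close> in auto)
    finally show ?thesis .
  qed simp
  then have "L2_sq_on M u (\<Union>\<T>) \<le> (\<integral>\<^sup>+x. (\<Sum>T\<in>\<T>. indicator T x * ennreal ((u x)\<^sup>2)) \<partial>M)"
    unfolding L2_sq_on_def by (intro nn_integral_mono)
  also have "\<dots> = (\<Sum>T\<in>\<T>. L2_sq_on M u T)"
    unfolding L2_sq_on_def
  proof (rule nn_integral_sum)
    fix T assume "T \<in> \<T>"
    note [measurable] = assms(2)[OF this] assms(3)
    show "(\<lambda>x. indicator T x * ennreal ((u x)\<^sup>2)) \<in> borel_measurable M"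
      by measurable
  qed
  finally show ?thesis .
qed

lemma measurable_gagliardo_kernel:
  fixes M :: "'a::euclidean_space measure"
  assumes ident: "(\<lambda>x. x) \<in> measurable M borel" and u: "u \<in> borel_measurable M" and "\<omega> \<in> sets M"
  shows "(\<lambda>p. indicator (\<omega> \<times> \<omega>) p * ennreal ((u (fst p) - u (snd p))\<^sup>2 / dist (fst p) (snd p) powr t))
           \<in> borel_measurable (M \<Otimes>\<^sub>M M)"
proof -
  note [measurable] = u measurable_fst_snd_borel[OF ident]
  have [measurable]: "\<omega> \<times> \<omega> \<in> sets (M \<Otimes>\<^sub>M M)"
    using \<open>\<omega> \<in> sets M\<close> by (intro pair_measureI)
  show ?thesis
    by measurable
qed

lemma gagliardo_sq_le_patches:
  fixes M :: "'a::euclidean_space measure"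
  assumes "sigma_finite_measure M" and ident: "(\<lambda>x. x) \<in> measurable M borel"
    and u: "u \<in> borel_measurable M" and "space M = \<Gamma>"
    and mesh: "finite \<T>" "\<Union>\<T> = \<Gamma>" "\<And>T. T \<in> \<T> \<Longrightarrow> T \<in> sets M" "\<forall>T\<in>\<T>. 0 < diameter T"
    and "0 < c" "M4 \<Gamma> c \<T>"
    and tail: "\<And>T x. T \<in> \<T> \<Longrightarrow> x \<in> T \<Longrightarrow>
      (\<integral>\<^sup>+y. indicator {y. diameter T / c \<le> dist x y} y * ennreal (1 / dist x y powr t) \<partial>M) \<le> ennreal (B T)"
    and B: "\<And>T. T \<in> \<T> \<Longrightarrow> 0 \<le> B T"
  shows "gagliardo_sq M t u \<Gamma> \<le> (\<Sum>T\<in>\<T>. \<Sum>T'\<in>patch_elems \<T> T. gagliardo_sq M t u (T \<union> T'))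
           + (\<Sum>T\<in>\<T>. ennreal (4 * B T) * L2_sq_on M u T)"
proof -
  note [measurable] = ident u measurable_fst_snd_borel[OF ident]
  define f where "f p = ennreal ((u (fst p) - u (snd p))\<^sup>2 / dist (fst p) (snd p) powr t)" for p
  define near where "near T p = (\<Sum>T'\<in>patch_elems \<T> T. indicator ((T \<union> T') \<times> (T \<union> T')) p * f p)" for T p
  define far where "far T p = far_kernel c t u T (fst p) (snd p) + far_kernel c t u T (snd p) (fst p)" for T p
  have "patch_elems \<T> T \<subseteq> \<T>" for T
    by (auto simp: patch_elems_def)
  then have near_terms: "(\<lambda>p. indicator ((T \<union> T') \<times> (T \<union> T')) p * f p) \<in> borel_measurable (M \<Otimes>\<^sub>M M)"
    if "T \<in> \<T>" "T' \<in> patch_elems \<T> T" for T T'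
    unfolding f_def using mesh(3) that by (intro measurable_gagliardo_kernel[OF ident u]) blast
  have near_meas: "near T \<in> borel_measurable (M \<Otimes>\<^sub>M M)" if "T \<in> \<T>" for T
    unfolding near_def using near_terms that by (intro borel_measurable_sum) auto
  have far_meas: "far T \<in> borel_measurable (M \<Otimes>\<^sub>M M)" if "T \<in> \<T>" for T
    using mesh(3)[OF that] unfolding far_def far_kernel_def by measurable
  have "gagliardo_sq M t u \<Gamma> \<le> (\<integral>\<^sup>+p. (\<Sum>T\<in>\<T>. near T p) + (\<Sum>T\<in>\<T>. far T p) \<partial>(M \<Otimes>\<^sub>M M))"
    unfolding gagliardo_sq_def
  proof (intro nn_integral_mono)
    fix p assume "p \<in> space (M \<Otimes>\<^sub>M M)"
    then obtain x y where "p = (x, y)" "x \<in> \<Gamma>" "y \<in> \<Gamma>"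
      using \<open>space M = \<Gamma>\<close> by (auto simp: space_pair_measure)
    then show "indicator (\<Gamma> \<times> \<Gamma>) p * ennreal ((u (fst p) - u (snd p))\<^sup>2 / dist (fst p) (snd p) powr t)
        \<le> (\<Sum>T\<in>\<T>. near T p) + (\<Sum>T\<in>\<T>. far T p)"
      using difference_quotient_split[OF mesh(1,2,4) \<open>0 < c\<close> \<open>M4 \<Gamma> c \<T>\<close>, of x y u t]
      by (simp add: near_def far_def f_def)
  qed
  also have "\<dots> = (\<Sum>T\<in>\<T>. \<integral>\<^sup>+p. near T p \<partial>(M \<Otimes>\<^sub>M M)) + (\<Sum>T\<in>\<T>. \<integral>\<^sup>+p. far T p \<partial>(M \<Otimes>\<^sub>M M))"
    using near_meas far_meas
    by (simp add: nn_integral_add borel_measurable_sum nn_integral_sum)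
  also have "(\<Sum>T\<in>\<T>. \<integral>\<^sup>+p. near T p \<partial>(M \<Otimes>\<^sub>M M))
      = (\<Sum>T\<in>\<T>. \<Sum>T'\<in>patch_elems \<T> T. gagliardo_sq M t u (T \<union> T'))"
    unfolding near_def gagliardo_sq_def f_def using near_terms
    by (intro sum.cong refl nn_integral_sum) (auto simp: f_def)
  also have "(\<Sum>T\<in>\<T>. \<integral>\<^sup>+p. far T p \<partial>(M \<Otimes>\<^sub>M M)) \<le> (\<Sum>T\<in>\<T>. ennreal (4 * B T) * L2_sq_on M u T)"
    unfolding far_def
    using far_kernel_pair_integral_le[OF \<open>sigma_finite_measure M\<close> ident u mesh(3) B tail]
    by (intro sum_mono) auto
  finally show ?thesis
    by (simp add: add_mono)
qed

lemma L2_sq_on_le_weighted: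
  assumes "finite \<T>" "\<Union>\<T> = \<Gamma>" "\<And>T. T \<in> \<T> \<Longrightarrow> T \<in> sets M" "u \<in> borel_measurable M"
    and "bounded \<Gamma>" "\<forall>T\<in>\<T>. 0 < diameter T" "0 \<le> \<sigma>"
  shows "L2_sq_on M u \<Gamma> \<le> (\<Sum>T\<in>\<T>. ennreal (diameter \<Gamma> powr (2 * \<sigma>) * diameter T powr (-2 * \<sigma>)) * L2_sq_on M u T)"
proof -
  have "L2_sq_on M u T \<le> ennreal (diameter \<Gamma> powr (2 * \<sigma>) * diameter T powr (-2 * \<sigma>)) * L2_sq_on M u T"
    if "T \<in> \<T>" for T
  proof -
    have "0 < diameter T" "diameter T \<le> diameter \<Gamma>"
      using that assms(2,5,6) by (auto intro: diameter_subset)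
    then have "diameter T powr (2 * \<sigma>) \<le> diameter \<Gamma> powr (2 * \<sigma>)"
      using \<open>0 \<le> \<sigma>\<close> by (intro powr_mono2) auto
    then have "1 \<le> diameter \<Gamma> powr (2 * \<sigma>) * diameter T powr (-2 * \<sigma>)"
      using \<open>0 < diameter T\<close> by (simp add: powr_minus divide_simps)
    then show ?thesis
      using mult_right_mono[of 1 _ "L2_sq_on M u T"] by (simp add: ennreal_leI[of 1, simplified])
  qed
  then have "(\<Sum>T\<in>\<T>. L2_sq_on M u T)
      \<le> (\<Sum>T\<in>\<T>. ennreal (diameter \<Gamma> powr (2 * \<sigma>) * diameter T powr (-2 * \<sigma>)) * L2_sq_on M u T)"
    by (rule sum_mono)
  then show ?thesis
    using L2_sq_on_Union_le[OF assms(1,3,4)] assms(2) by simp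
qed

lemma scalar_norm_sq_le_patches:
  fixes M :: "'a::euclidean_space measure"
  assumes "sigma_finite_measure M" "(\<lambda>x. x) \<in> measurable M borel" "u \<in> borel_measurable M"
    and "space M = \<Gamma>" "bounded \<Gamma>"
    and mesh: "finite \<T>" "\<Union>\<T> = \<Gamma>" "\<And>T. T \<in> \<T> \<Longrightarrow> T \<in> sets M" "\<forall>T\<in>\<T>. 0 < diameter T"
    and "0 < c" "M4 \<Gamma> c \<T>" "0 \<le> K" "0 \<le> \<sigma>"
    and tail: "\<And>x \<delta>. x \<in> \<Gamma> \<Longrightarrow> 0 < \<delta> \<Longrightarrow>
      (\<integral>\<^sup>+y. indicator {y. \<delta> \<le> dist x y} y * ennreal (1 / dist x y powr t) \<partial>M) \<le> ennreal (K * \<delta> powr (-2 * \<sigma>))"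
  shows "gagliardo_sq M t u \<Gamma> + L2_sq_on M u \<Gamma>
     \<le> (\<Sum>T\<in>\<T>. \<Sum>T'\<in>patch_elems \<T> T. gagliardo_sq M t u (T \<union> T'))
       + (\<Sum>T\<in>\<T>. ennreal ((4 * K * c powr (2 * \<sigma>) + diameter \<Gamma> powr (2 * \<sigma>)) * diameter T powr (-2 * \<sigma>))
            * L2_sq_on M u T)"
proof -
  define w where "w T = diameter T powr (-2 * \<sigma>)" for T :: "'a set"
  have "(diameter T / c) powr (-2 * \<sigma>) = c powr (2 * \<sigma>) * w T" if "T \<in> \<T>" for T
  proof -
    have "(diameter T / c) powr (-2 * \<sigma>) = diameter T powr (-2 * \<sigma>) / c powr (-2 * \<sigma>)"
      using mesh(4) that \<open>0 < c\<close> by (simp add: powr_divide)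
    then show ?thesis
      using \<open>0 < c\<close> by (simp add: w_def powr_minus divide_inverse)
  qed
  then have "(\<integral>\<^sup>+y. indicator {y. diameter T / c \<le> dist x y} y * ennreal (1 / dist x y powr t) \<partial>M)
      \<le> ennreal (K * c powr (2 * \<sigma>) * w T)" if "T \<in> \<T>" "x \<in> T" for T x
    using tail[of x "diameter T / c"] that mesh(2,4) \<open>0 < c\<close> by (auto simp: mult.assoc)
  then have semi: "gagliardo_sq M t u \<Gamma> \<le> (\<Sum>T\<in>\<T>. \<Sum>T'\<in>patch_elems \<T> T. gagliardo_sq M t u (T \<union> T'))
      + (\<Sum>T\<in>\<T>. ennreal (4 * K * c powr (2 * \<sigma>) * w T) * L2_sq_on M u T)"
    using gagliardo_sq_le_patches[OF assms(1-4) mesh \<open>0 < c\<close> \<open>M4 \<Gamma> c \<T>\<close>, of t "\<lambda>T. K * c powr (2 * \<sigma>) * w T"]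
      \<open>0 \<le> K\<close> by (simp add: w_def mult.assoc)
  have L2: "L2_sq_on M u \<Gamma> \<le> (\<Sum>T\<in>\<T>. ennreal (diameter \<Gamma> powr (2 * \<sigma>) * w T) * L2_sq_on M u T)"
    unfolding w_def using L2_sq_on_le_weighted[OF mesh(1-3) assms(3,5) mesh(4) \<open>0 \<le> \<sigma>\<close>] .
  have "ennreal (4 * K * c powr (2 * \<sigma>) * w T) * L + ennreal (diameter \<Gamma> powr (2 * \<sigma>) * w T) * L
      = ennreal ((4 * K * c powr (2 * \<sigma>) + diameter \<Gamma> powr (2 * \<sigma>)) * diameter T powr (-2 * \<sigma>)) * L" for T L
    using \<open>0 \<le> K\<close> by (simp add: w_def distrib_right ennreal_plus)
  with add_mono[OF semi L2] show ?thesis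
    by (simp add: add.assoc sum.distrib[symmetric])
qed

lemma bi_lipschitz_image_diameter_pos:
  fixes X :: "'b::euclidean_space set" and \<gamma> :: "'b \<Rightarrow> 'a::euclidean_space"
  assumes "compact (\<gamma> ` X)" "compact_lipschitz_domain X" "bi_lipschitz_on X \<gamma>"
  shows "0 < diameter (\<gamma> ` X)"
proof -
  obtain U where U: "bounded_lipschitz_domain U" "X = closure U"
    using assms(2) by (auto simp: compact_lipschitz_domain_def)
  then obtain a r where "0 < r" "ball a r \<subseteq> U"
    by (metis bounded_lipschitz_domain_def ex_in_conv open_contains_ball)
  obtain b :: 'b where "b \<in> Basis"
    using nonempty_Basis by blast
  define a' where "a' = a + (r / 2) *\<^sub>R b"
  have "dist a a' = r / 2"
    using \<open>b \<in> Basis\<close> \<open>0 < r\<close> by (simp add: a'_def dist_norm)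
  then have "a \<in> U" "a' \<in> U" "0 < dist a a'"
    using \<open>0 < r\<close> \<open>ball a r \<subseteq> U\<close> by auto
  then have "a \<in> X" "a' \<in> X" "0 < dist a a'"
    using U(2) closure_subset by auto
  moreover obtain L where "0 < L" "\<forall>x\<in>X. \<forall>y\<in>X. dist x y \<le> L * dist (\<gamma> x) (\<gamma> y)"
    using assms(3) by (auto simp: bi_lipschitz_on_def)
  ultimately have "0 < dist (\<gamma> a) (\<gamma> a')"
    by (metis dist_pos_lt dist_self mult_zero_right not_le)
  also have "dist (\<gamma> a) (\<gamma> a') \<le> diameter (\<gamma> ` X)"
    using diameter_bounded_bound[OF compact_imp_bounded[OF assms(1)]] \<open>a \<in> X\<close> \<open>a' \<in> X\<close> by blast
  finally show ?thesis .
qed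

lemma M4_imp_pos:
  assumes "M4 \<Gamma> c \<T>" "T \<in> \<T>" "0 < diameter T" "bounded \<Gamma>"
  shows "0 < c"
proof (rule ccontr)
  assume "\<not> 0 < c"
  moreover have "0 \<le> dist_set \<Gamma> T (\<Gamma> - patch \<T> T)"
    using diameter_ge_0[OF \<open>bounded \<Gamma>\<close>] by (simp add: dist_set_def)
  ultimately have "c * dist_set \<Gamma> T (\<Gamma> - patch \<T> T) \<le> 0"
    by (simp add: mult_nonpos_nonneg)
  then show False
    using assms(1-3) by (fastforce simp: M4_def)
qed

lemma mesh_element_diameter_pos:
  assumes "is_mesh TYPE('b::euclidean_space) \<Gamma> \<T>" "T \<in> \<T>"
  shows "0 < diameter T"
  using assms bi_lipschitz_image_diameter_pos unfolding is_mesh_def by metis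

lemma mesh_element_in_sets_surface_measure:
  assumes "closed \<Gamma>" "is_mesh TYPE('b::euclidean_space) \<Gamma> \<T>" "T \<in> \<T>"
  shows "T \<in> sets (surface_measure \<Gamma>)"
proof -
  have "closed T" "T \<subseteq> \<Gamma>"
    using assms(2,3) by (auto simp: is_mesh_def compact_imp_closed)
  then show ?thesis
    using borel_Int_in_sets_surface_measure[of \<Gamma> T] \<open>closed \<Gamma>\<close> by (simp add: Int_absorb2)
qed

lemma Hs_norm_sq_le_patches:
  fixes \<Gamma> :: "'a::euclidean_space set"
  assumes "closed \<Gamma>" "bounded \<Gamma>" "finite_measure (surface_measure \<Gamma>)"
    and mesh: "is_mesh TYPE('b::euclidean_space) \<Gamma> \<T>" and "M4 \<Gamma> c \<T>" "in_Hs \<Gamma> \<sigma> D v" "0 \<le> K" "0 < \<sigma>"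
    and tail: "\<forall>x\<in>\<Gamma>. \<forall>\<delta>>0. (\<integral>\<^sup>+y. indicator {y. \<delta> \<le> dist x y} y *
       ennreal (1 / dist x y powr (real DIM('a) - 1 + 2 * \<sigma>)) \<partial>surface_measure \<Gamma>) \<le> ennreal (K * \<delta> powr (-2 * \<sigma>))"
    and C: "4 * K * \<bar>c\<bar> powr (2 * \<sigma>) + diameter \<Gamma> powr (2 * \<sigma>) \<le> C"
  shows "Hs_norm_sq \<Gamma> \<sigma> D v \<Gamma>
    \<le> (\<Sum>T\<in>\<T>. \<Sum>T'\<in>patch_elems \<T> T. Hs_semi_sq \<Gamma> \<sigma> D v (T \<union> T'))
      + ennreal C * (\<Sum>T\<in>\<T>. ennreal (diameter T powr (- 2 * \<sigma>)) * L2_sq \<Gamma> D v T)"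
proof (cases "\<T> = {}")
  case True
  then show ?thesis
    using mesh by (simp add: is_mesh_def Hs_norm_sq_def L2_sq_def Hs_semi_sq_def)
next
  case False
  define M where "M = surface_measure \<Gamma>"
  define t where "t = real DIM('a) - 1 + 2 * \<sigma>"
  define C' where "C' = 4 * K * c powr (2 * \<sigma>) + diameter \<Gamma> powr (2 * \<sigma>)"
  have "0 < c"
    using False M4_imp_pos[OF \<open>M4 \<Gamma> c \<T>\<close> _ mesh_element_diameter_pos[OF mesh] \<open>bounded \<Gamma>\<close>] by blast
  have component: "gagliardo_sq M t (\<lambda>x. v x j) \<Gamma> + L2_sq_on M (\<lambda>x. v x j) \<Gamma>
      \<le> (\<Sum>T\<in>\<T>. \<Sum>T'\<in>patch_elems \<T> T. gagliardo_sq M t (\<lambda>x. v x j) (T \<union> T'))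
        + (\<Sum>T\<in>\<T>. ennreal (C' * diameter T powr (-2 * \<sigma>)) * L2_sq_on M (\<lambda>x. v x j) T)" if "j < D" for j
    unfolding C'_def
  proof (rule scalar_norm_sq_le_patches)
    show "sigma_finite_measure M"
      using \<open>finite_measure (surface_measure \<Gamma>)\<close> by (simp add: M_def finite_measure_def)
    show "(\<lambda>x. x) \<in> measurable M borel"
      unfolding M_def using \<open>closed \<Gamma>\<close> by (intro measurable_ident_surface_measure) simp
    show "(\<lambda>x. v x j) \<in> borel_measurable M"
      using \<open>in_Hs \<Gamma> \<sigma> D v\<close> that by (simp add: M_def in_Hs_def)
  qed (use mesh mesh_element_in_sets_surface_measure[OF \<open>closed \<Gamma>\<close> mesh] mesh_element_diameter_pos[OF mesh]
      \<open>0 < c\<close> \<open>M4 \<Gamma> c \<T>\<close> \<open>bounded \<Gamma>\<close> \<open>0 \<le> K\<close> \<open>0 < \<sigma>\<close> tail in \<open>auto simp: M_def t_def is_mesh_def\<close>)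
  have "Hs_norm_sq \<Gamma> \<sigma> D v \<Gamma> = (\<Sum>j<D. gagliardo_sq M t (\<lambda>x. v x j) \<Gamma> + L2_sq_on M (\<lambda>x. v x j) \<Gamma>)"
    by (simp add: Hs_norm_sq_def Hs_semi_sq_eq_sum_gagliardo_sq L2_sq_eq_sum_L2_sq_on sum.distrib add.commute M_def t_def)
  also have "\<dots> \<le> (\<Sum>j<D. (\<Sum>T\<in>\<T>. \<Sum>T'\<in>patch_elems \<T> T. gagliardo_sq M t (\<lambda>x. v x j) (T \<union> T'))
        + (\<Sum>T\<in>\<T>. ennreal (C' * diameter T powr (-2 * \<sigma>)) * L2_sq_on M (\<lambda>x. v x j) T))"
    using component by (intro sum_mono) simp
  also have "\<dots> = (\<Sum>T\<in>\<T>. \<Sum>T'\<in>patch_elems \<T> T. Hs_semi_sq \<Gamma> \<sigma> D v (T \<union> T'))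
      + ennreal C' * (\<Sum>T\<in>\<T>. ennreal (diameter T powr (- 2 * \<sigma>)) * L2_sq \<Gamma> D v T)"
    using \<open>0 < c\<close> \<open>0 \<le> K\<close>
    by (simp add: M_def t_def C'_def Hs_semi_sq_eq_sum_gagliardo_sq L2_sq_eq_sum_L2_sq_on sum.distrib
        sum_distrib_left ennreal_mult mult.assoc sum.swap[of _ "{..<D}"])
  also have "\<dots> \<le> (\<Sum>T\<in>\<T>. \<Sum>T'\<in>patch_elems \<T> T. Hs_semi_sq \<Gamma> \<sigma> D v (T \<union> T'))
      + ennreal C * (\<Sum>T\<in>\<T>. ennreal (diameter T powr (- 2 * \<sigma>)) * L2_sq \<Gamma> D v T)"
    using C \<open>0 < c\<close> by (intro add_left_mono mult_right_mono ennreal_leI) (simp_all add: C'_def)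
  finally show ?thesis .
qed

theorem lemma4p5:
  fixes \<Omega> :: "'a::euclidean_space set" and \<sigma> Ccent :: real
  assumes "DIM('a) \<ge> 2" and "DIM('b::euclidean_space) + 1 = DIM('a)"
    and "bounded_lipschitz_domain \<Omega>"
    and "0 < \<sigma>" and "\<sigma> < 1"
  shows "\<exists>C>0. \<forall>\<T> (D::nat) v.
     is_mesh TYPE('b) (frontier \<Omega>) \<T> \<longrightarrow> M4 (frontier \<Omega>) Ccent \<T> \<longrightarrow>
     in_Hs (frontier \<Omega>) \<sigma> D v \<longrightarrow>
     Hs_norm_sq (frontier \<Omega>) \<sigma> D v (frontier \<Omega>)
       \<le> (\<Sum>T\<in>\<T>. \<Sum>T'\<in>patch_elems \<T> T. Hs_semi_sq (frontier \<Omega>) \<sigma> D v (T \<union> T'))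
         + ennreal C * (\<Sum>T\<in>\<T>. ennreal (diameter T powr (- 2 * \<sigma>)) * L2_sq (frontier \<Omega>) D v T)"
proof -
  obtain K where "0 \<le> K" and tail: "\<forall>x\<in>frontier \<Omega>. \<forall>\<delta>>0. (\<integral>\<^sup>+y. indicator {y. \<delta> \<le> dist x y} y *
      ennreal (1 / dist x y powr (real DIM('a) - 1 + 2 * \<sigma>)) \<partial>surface_measure (frontier \<Omega>))
        \<le> ennreal (K * \<delta> powr (-2 * \<sigma>))"
    using surface_tail_integral_bound[OF assms(1,3,4)] by blast
  have "bounded (frontier \<Omega>)"
    using assms(3) compact_frontier_bounded compact_imp_bounded by (auto simp: bounded_lipschitz_domain_def)
  define C where "C = 4 * K * \<bar>Ccent\<bar> powr (2 * \<sigma>) + diameter (frontier \<Omega>) powr (2 * \<sigma>) + 1"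
  have "0 < C"
    using \<open>0 \<le> K\<close> by (simp add: C_def add_nonneg_pos)
  moreover have "Hs_norm_sq (frontier \<Omega>) \<sigma> D v (frontier \<Omega>)
       \<le> (\<Sum>T\<in>\<T>. \<Sum>T'\<in>patch_elems \<T> T. Hs_semi_sq (frontier \<Omega>) \<sigma> D v (T \<union> T'))
         + ennreal C * (\<Sum>T\<in>\<T>. ennreal (diameter T powr (- 2 * \<sigma>)) * L2_sq (frontier \<Omega>) D v T)"
    if "is_mesh TYPE('b) (frontier \<Omega>) \<T>" "M4 (frontier \<Omega>) Ccent \<T>" "in_Hs (frontier \<Omega>) \<sigma> D v" for \<T> D v
    using Hs_norm_sq_le_patches[OF frontier_closed \<open>bounded (frontier \<Omega>)\<close>
        finite_measure_surface_measure[OF assms(1,3)] that \<open>0 \<le> K\<close> \<open>0 < \<sigma>\<close> tail]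
    by (simp add: C_def)
  ultimately show ?thesis
    by blast
qed

end
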